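(* If all the ai-cycles in an atomic flow B are fragile cycles, then there exists a cycle-free atomic flow C such that B →_bc C.
   Context: Atomic flows are finite directed acyclic graphs whose vertices are labelled interaction (no upper edges, two lower edges), cointeraction or cut (two upper edges, no lower edges), weakening (one lower edge), coweakening (one upper edge), contraction (two upper edges, one lower edge) or cocontraction (one upper edge, two lower edges), together with dangling upper edges (coming from the top) and lower edges (going to the bottom), and which admit a polarity assignment (edges of a (co)contraction vertex share a polarity, the two edges of a (co)interaction vertex have opposite polarities). A path is a sequence of consecutive edges going only downwards (or its reverse). An ai-path is a concatenation of paths joined at interaction or cointeraction vertices (consecutive edges distinct). An ai-connection is a path from an interaction vertex to a cointeraction vertex or vice versa; a simple edge is an ai-connection consisting of a single edge. An ai-cycle is an ai-path from a vertex to itself in which no edge appears twice (up to cyclic permutation and inversion); a fragile cycle is an ai-cycle containing a simple edge; a flow is cycle-free if it has no ai-cycles. The reduction →_bc ("break ai-cycles") is defined inductively. Base case: if B has no fragile cycles, then B →_bc B. Inductive case: suppose B consists of a flow A with upper edges ε_1,…,ε_h and an additional upper edge 2, lower edges ε'_1,…,ε'_k and an additional lower edge 3, together with an interaction vertex whose two lower edges are 2 and 1, and a cointeraction vertex whose two upper edges are 3 and 1 (so 1 is a simple edge). Let B' be a copy Ã of A (edges renamed with tildes) in which the edge 2̃ is the lower edge of a new weakening vertex, and B'' a copy Â of A (edges renamed with hats) in which the edge 3̂ is the upper edge of a new coweakening vertex. If edge 1 belongs to an ai-cycle, B' →_bc D' and B'' →_bc D'', then B →_bc C, where C is formed from D'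 and D'' by identifying the lower edge 3̃ of D' with the upper edge 2̂ of D'', by attaching, for each i, a cocontraction vertex with upper edge ε_i and lower edges ε̃_i (into D') and ε̂_i (into D''), and, for each j, a contraction vertex with upper edges ε̃'_j (from D') and ε̂'_j (from D'') and lower edge ε'_j. *)

theory Defs
  imports Main
begin

datatype vkind = Interaction | Cointeraction | Weakening | Coweakening
  | Contraction | Cocontraction

text \<open>For an edge e, fsrc F e is the vertex at its upper end (None: the edge is a
  dangling upper edge, coming from the top) and ftgt F e is the vertex at its
  lower end (None: the edge is a dangling lower edge, going to the bottom).\<close>

record flow =
  fverts :: "nat set"
  fedges :: "nat set"
  flab   :: "nat \<Rightarrow> vkind"
  fsrc   :: "nat \<Rightarrow> nat option"
  ftgt   :: "nat \<Rightarrow> nat option"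

definition lower_edges :: "flow \<Rightarrow> nat \<Rightarrow> nat set" where
  "lower_edges F v = {e \<in> fedges F. fsrc F e = Some v}"

definition upper_edges :: "flow \<Rightarrow> nat \<Rightarrow> nat set" where
  "upper_edges F v = {e \<in> fedges F. ftgt F e = Some v}"

definition flow_upper :: "flow \<Rightarrow> nat set" where
  "flow_upper F = {e \<in> fedges F. fsrc F e = None}"

definition flow_lower :: "flow \<Rightarrow> nat set" where
  "flow_lower F = {e \<in> fedges F. ftgt F e = None}"

definition arity_ok :: "vkind \<Rightarrow> nat set \<Rightarrow> nat set \<Rightarrow> bool" where
  "arity_ok k U L = (case k of
      Interaction \<Rightarrow> U = {} \<and> card L = 2
    | Cointeraction \<Rightarrow> card U = 2 \<and> L = {}
    | Weakening \<Rightarrow> U = {} \<and> card L = 1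
    | Coweakening \<Rightarrow> card U = 1 \<and> L = {}
    | Contraction \<Rightarrow> card U = 2 \<and> card L = 1
    | Cocontraction \<Rightarrow> card U = 1 \<and> card L = 2)"

definition polarity_ok :: "flow \<Rightarrow> (nat \<Rightarrow> bool) \<Rightarrow> bool" where
  "polarity_ok F pol \<longleftrightarrow> (\<forall>v \<in> fverts F.
     (flab F v \<in> {Contraction, Cocontraction} \<longrightarrow>
        (\<forall>e \<in> upper_edges F v \<union> lower_edges F v.
          \<forall>e' \<in> upper_edges F v \<union> lower_edges F v. pol e = pol e')) \<and>
     (flab F v = Interaction \<longrightarrow>
        (\<forall>e \<in> lower_edges F v. \<forall>e' \<in> lower_edges F v. e \<noteq> e' \<longrightarrow> pol e \<noteq> pol e')) \<and>
     (flab F v = Cointeraction \<longrightarrow>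
        (\<forall>e \<in> upper_edges F v. \<forall>e' \<in> upper_edges F v. e \<noteq> e' \<longrightarrow> pol e \<noteq> pol e')))"

definition atomic_flow :: "flow \<Rightarrow> bool" where
  "atomic_flow F \<longleftrightarrow>
     finite (fverts F) \<and> finite (fedges F) \<and>
     (\<forall>e \<in> fedges F. \<forall>v. fsrc F e = Some v \<longrightarrow> v \<in> fverts F) \<and>
     (\<forall>e \<in> fedges F. \<forall>v. ftgt F e = Some v \<longrightarrow> v \<in> fverts F) \<and>
     (\<forall>v \<in> fverts F. arity_ok (flab F v) (upper_edges F v) (lower_edges F v)) \<and>
     acyclic {(u, v). \<exists>e \<in> fedges F. fsrc F e = Some u \<and> ftgt F e = Some v} \<and>
     (\<exists>pol. polarity_ok F pol)"

text \<open>A traversal step is an edge together with a direction (True: downwards).\<close>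

definition entry_v :: "flow \<Rightarrow> nat \<times> bool \<Rightarrow> nat option" where
  "entry_v F s = (if snd s then fsrc F (fst s) else ftgt F (fst s))"

definition exit_v :: "flow \<Rightarrow> nat \<times> bool \<Rightarrow> nat option" where
  "exit_v F s = (if snd s then ftgt F (fst s) else fsrc F (fst s))"

definition ai_join :: "flow \<Rightarrow> nat \<times> bool \<Rightarrow> nat \<times> bool \<Rightarrow> bool" where
  "ai_join F s s' \<longleftrightarrow> (\<exists>v \<in> fverts F. exit_v F s = Some v \<and> entry_v F s' = Some v \<and>
      (snd s = snd s' \<or> (fst s \<noteq> fst s' \<and> flab F v \<in> {Interaction, Cointeraction})))"

definition ai_path :: "flow \<Rightarrow> (nat \<times> bool) list \<Rightarrow> bool" where
  "ai_path F p \<longleftrightarrow> p \<noteq> [] \<and> fst ` set p \<subseteq> fedges F \<and> successively (ai_join F) p"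

definition ai_cycle :: "flow \<Rightarrow> (nat \<times> bool) list \<Rightarrow> bool" where
  "ai_cycle F p \<longleftrightarrow> ai_path F p \<and> ai_join F (last p) (hd p) \<and> distinct (map fst p)"

definition simple_edge :: "flow \<Rightarrow> nat \<Rightarrow> bool" where
  "simple_edge F e \<longleftrightarrow> e \<in> fedges F \<and> (\<exists>i c. fsrc F e = Some i \<and> ftgt F e = Some c \<and>
      flab F i = Interaction \<and> flab F c = Cointeraction)"

definition fragile_cycle :: "flow \<Rightarrow> (nat \<times> bool) list \<Rightarrow> bool" where
  "fragile_cycle F p \<longleftrightarrow> ai_cycle F p \<and> (\<exists>e \<in> fst ` set p. simple_edge F e)"

definition cycle_free :: "flow \<Rightarrow> bool" where
  "cycle_free F \<longleftrightarrow> \<not> (\<exists>p. ai_cycle F p)"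

definition remove_ai :: "flow \<Rightarrow> nat \<Rightarrow> nat \<Rightarrow> nat \<Rightarrow> nat \<Rightarrow> nat \<Rightarrow> flow" where
  "remove_ai B i c e1 e2 e3 = B\<lparr>fverts := fverts B - {i, c}, fedges := fedges B - {e1},
     fsrc := (fsrc B)(e2 := None), ftgt := (ftgt B)(e3 := None)\<rparr>"

definition copy_wk :: "flow \<Rightarrow> nat \<Rightarrow> (nat \<Rightarrow> nat) \<Rightarrow> (nat \<Rightarrow> nat) \<Rightarrow> nat \<Rightarrow> flow \<Rightarrow> bool" where
  "copy_wk A e2 fV fE w B' \<longleftrightarrow>
     inj_on fV (fverts A) \<and> inj_on fE (fedges A) \<and> w \<notin> fV ` fverts A \<and>
     fverts B' = insert w (fV ` fverts A) \<and> fedges B' = fE ` fedges A \<and>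
     (\<forall>v \<in> fverts A. flab B' (fV v) = flab A v) \<and> flab B' w = Weakening \<and>
     (\<forall>e \<in> fedges A.
        fsrc B' (fE e) = (if e = e2 then Some w else map_option fV (fsrc A e)) \<and>
        ftgt B' (fE e) = map_option fV (ftgt A e))"

definition copy_cowk :: "flow \<Rightarrow> nat \<Rightarrow> (nat \<Rightarrow> nat) \<Rightarrow> (nat \<Rightarrow> nat) \<Rightarrow> nat \<Rightarrow> flow \<Rightarrow> bool" where
  "copy_cowk A e3 gV gE x B'' \<longleftrightarrow>
     inj_on gV (fverts A) \<and> inj_on gE (fedges A) \<and> x \<notin> gV ` fverts A \<and>
     fverts B'' = insert x (gV ` fverts A) \<and> fedges B'' = gE ` fedges A \<and>
     (\<forall>v \<in> fverts A. flab B'' (gV v) = flab A v) \<and> flab B'' x = Coweakening \<and>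
     (\<forall>e \<in> fedges A.
        fsrc B'' (gE e) = map_option gV (fsrc A e) \<and>
        ftgt B'' (gE e) = (if e = e3 then Some x else map_option gV (ftgt A e)))"

text \<open>D1 (resp. D2) is the result of reducing B' (resp. B''); u1, l1 (resp. u2, l2)
  send the upper/lower edges of B' (resp. B'') to the corresponding upper/lower edges of
  D1 (resp. D2). C contains renamed copies of D1 (via hV1, hE1) and D2 (via hV2, hE2) in
  which the lower edge of D1 corresponding to e3 is identified with the upper edge of D2
  corresponding to e2; for each upper edge eps of B a new cocontraction vertex k eps with
  upper edge tp eps and lower edges into D1 and D2; for each lower edge eps' of B a new
  contraction vertex m eps' with upper edges from D1 and D2 and lower edge bt eps'.\<close>

definition glue :: "flow \<Rightarrow> nat \<Rightarrow> nat \<Rightarrow> (nat \<Rightarrow> nat) \<Rightarrow> (nat \<Rightarrow> nat)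
    \<Rightarrow> flow \<Rightarrow> (nat \<Rightarrow> nat) \<Rightarrow> (nat \<Rightarrow> nat)
    \<Rightarrow> flow \<Rightarrow> (nat \<Rightarrow> nat) \<Rightarrow> (nat \<Rightarrow> nat)
    \<Rightarrow> (nat \<Rightarrow> nat) \<Rightarrow> (nat \<Rightarrow> nat) \<Rightarrow> (nat \<Rightarrow> nat) \<Rightarrow> (nat \<Rightarrow> nat)
    \<Rightarrow> (nat \<Rightarrow> nat) \<Rightarrow> (nat \<Rightarrow> nat) \<Rightarrow> (nat \<Rightarrow> nat) \<Rightarrow> (nat \<Rightarrow> nat) \<Rightarrow> flow \<Rightarrow> bool" where
  "glue A e2 e3 fE gE D1 u1 l1 D2 u2 l2 hV1 hE1 hV2 hE2 k m tp bt C \<longleftrightarrow>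
    (let Ups = flow_upper A - {e2}; Lows = flow_lower A - {e3};
         V1 = fverts D1; V2 = fverts D2; E1 = fedges D1; E2 = fedges D2;
         j = hE1 (l1 (fE e3)) in
     inj_on hV1 V1 \<and> inj_on hV2 V2 \<and> inj_on k Ups \<and> inj_on m Lows \<and>
     inj_on hE1 E1 \<and> inj_on hE2 E2 \<and> inj_on tp Ups \<and> inj_on bt Lows \<and>
     fverts C = hV1 ` V1 \<union> hV2 ` V2 \<union> k ` Ups \<union> m ` Lows \<and>
     hV1 ` V1 \<inter> hV2 ` V2 = {} \<and>
     (hV1 ` V1 \<union> hV2 ` V2) \<inter> k ` Ups = {} \<and>
     (hV1 ` V1 \<union> hV2 ` V2 \<union> k ` Ups) \<inter> m ` Lows = {} \<and>
     fedges C = hE1 ` E1 \<union> hE2 ` E2 \<union> tp ` Ups \<union> bt ` Lows \<and>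
     j = hE2 (u2 (gE e2)) \<and>
     hE1 ` E1 \<inter> hE2 ` E2 = {j} \<and>
     (hE1 ` E1 \<union> hE2 ` E2) \<inter> tp ` Ups = {} \<and>
     (hE1 ` E1 \<union> hE2 ` E2 \<union> tp ` Ups) \<inter> bt ` Lows = {} \<and>
     (\<forall>v \<in> V1. flab C (hV1 v) = flab D1 v) \<and>
     (\<forall>v \<in> V2. flab C (hV2 v) = flab D2 v) \<and>
     (\<forall>\<epsilon> \<in> Ups. flab C (k \<epsilon>) = Cocontraction) \<and>
     (\<forall>\<epsilon> \<in> Lows. flab C (m \<epsilon>) = Contraction) \<and>
     (\<forall>e \<in> E1. \<forall>v. fsrc D1 e = Some v \<longrightarrow> fsrc C (hE1 e) = Some (hV1 v)) \<and>
     (\<forall>e \<in> E1. \<forall>v. ftgt D1 e = Some v \<longrightarrow> ftgt C (hE1 e) = Some (hV1 v)) \<and>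
     (\<forall>e \<in> E2. \<forall>v. fsrc D2 e = Some v \<longrightarrow> fsrc C (hE2 e) = Some (hV2 v)) \<and>
     (\<forall>e \<in> E2. \<forall>v. ftgt D2 e = Some v \<longrightarrow> ftgt C (hE2 e) = Some (hV2 v)) \<and>
     (\<forall>\<epsilon> \<in> Ups. fsrc C (hE1 (u1 (fE \<epsilon>))) = Some (k \<epsilon>) \<and>
                 fsrc C (hE2 (u2 (gE \<epsilon>))) = Some (k \<epsilon>) \<and>
                 ftgt C (tp \<epsilon>) = Some (k \<epsilon>) \<and> fsrc C (tp \<epsilon>) = None) \<and>
     (\<forall>\<epsilon> \<in> Lows. ftgt C (hE1 (l1 (fE \<epsilon>))) = Some (m \<epsilon>) \<and>
                  ftgt C (hE2 (l2 (gE \<epsilon>))) = Some (m \<epsilon>) \<and>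
                  fsrc C (bt \<epsilon>) = Some (m \<epsilon>) \<and> ftgt C (bt \<epsilon>) = None))"

text \<open>bc B C up lo: B reduces to C, where up (resp. lo) maps each upper (resp. lower)
  edge of B to the corresponding upper (resp. lower) edge of C.\<close>

inductive bc :: "flow \<Rightarrow> flow \<Rightarrow> (nat \<Rightarrow> nat) \<Rightarrow> (nat \<Rightarrow> nat) \<Rightarrow> bool" where
  base: "atomic_flow B \<Longrightarrow> \<not> (\<exists>p. fragile_cycle B p) \<Longrightarrow> bc B B (\<lambda>e. e) (\<lambda>e. e)"
| step: "\<lbrakk> atomic_flow B;
           i \<in> fverts B; flab B i = Interaction; lower_edges B i = {e1, e2}; e1 \<noteq> e2;
           c \<in> fverts B; flab B c = Cointeraction; upper_edges B c = {e1, e3}; e1 \<noteq> e3;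
           \<exists>p. ai_cycle B p \<and> e1 \<in> fst ` set p;
           A = remove_ai B i c e1 e2 e3;
           copy_wk A e2 fV fE w B'; copy_cowk A e3 gV gE x B'';
           bc B' D1 u1 l1; bc B'' D2 u2 l2;
           glue A e2 e3 fE gE D1 u1 l1 D2 u2 l2 hV1 hE1 hV2 hE2 k m tp bt C \<rbrakk>
         \<Longrightarrow> bc B C tp bt"

definition bc_rel :: "flow \<Rightarrow> flow \<Rightarrow> bool" (infix "\<rightarrow>\<^sub>b\<^sub>c" 50) where
  "B \<rightarrow>\<^sub>b\<^sub>c C \<longleftrightarrow> (\<exists>up lo. bc B C up lo)"

end

theory Submission
  imports Defs
begin

text \<open>Induction on the number of edges. If B has no fragile cycle, it has no ai-cycle at all
  and B reduces to itself. Otherwise take a simple edge on an ai-cycle. B' and B'' arise from B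
  by deleting that edge and one of its ends and turning the other end into a (co)weakening, so
  they have fewer edges, and their ai-cycles are ai-cycles of B avoiding the (co)weakening,
  hence still fragile. By induction they reduce to cycle-free D' and D''. An ai-cycle of the
  glued flow C cannot enter the new (co)contractions, whose outer edges dangle, so it lives on
  the copies of D' and D''; the only edge between the two copies is the identified edge, which
  the cycle would cross an even number of times but uses at most once. So the cycle stays in
  one copy, which is impossible. Choosing the polarities of D' and D'' to extend one of B makes
  C an atomic flow.\<close>

lemma walk_colour_change:
  assumes "successively R q" "q \<noteq> []" "\<And>x y. R x y \<Longrightarrow> ex x = en y"
    and "\<And>s. s \<in> set q \<Longrightarrow> T (ex s) = T (en s) \<longleftrightarrow> fst s \<noteq> j" "distinct (map fst q)"
  shows "T (ex (last q)) = T (en (hd q)) \<longleftrightarrow> j \<notin> fst ` set q"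
  using assms
proof (induction q)
  case Nil
  then show ?case by simp
next
  case (Cons a q)
  show ?case
  proof (cases "q = []")
    case True
    then show ?thesis using Cons.prems(4)[of a] by auto
  next
    case False
    have R: "R a (hd q)" and sq: "successively R q"
      using Cons.prems(1) False by (auto simp: successively_Cons)
    have IH: "T (ex (last q)) = T (en (hd q)) \<longleftrightarrow> j \<notin> fst ` set q"
      using Cons.IH[OF sq False Cons.prems(3)] Cons.prems(4,5) by auto
    have "ex a = en (hd q)" using Cons.prems(3)[OF R] .
    moreover have "T (ex a) = T (en a) \<longleftrightarrow> fst a \<noteq> j" using Cons.prems(4) by simp
    moreover have "fst a \<notin> fst ` set q" using Cons.prems(5) by simp
    ultimately show ?thesis using IH False by (cases "fst a = j") auto
  qed
qed

lemma walk_colour_constant: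
  assumes "successively R q" "\<And>x y. R x y \<Longrightarrow> ex x = en y"
    and "\<And>s. s \<in> set q \<Longrightarrow> T (ex s) = T (en s)" "s \<in> set q"
  shows "T (en s) = T (en (hd q))"
  using assms
proof (induction q)
  case Nil
  then show ?case by simp
next
  case (Cons a q)
  show ?case
  proof (cases "s = a")
    case False
    then have s: "s \<in> set q" using Cons.prems(4) by simp
    then have R: "R a (hd q)" and sq: "successively R q"
      using Cons.prems(1) by (auto simp: successively_Cons)
    have "T (en s) = T (en (hd q))" using Cons.IH[OF sq Cons.prems(2) _ s] Cons.prems(3) by auto
    also have "\<dots> = T (ex a)" using Cons.prems(2)[OF R] by simp
    also have "\<dots> = T (en a)" using Cons.prems(3) by simp
    finally show ?thesis by simp
  qed simp
qed

lemma acyclic_by_rank: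
  fixes r :: "'a \<Rightarrow> nat"
  assumes "\<And>a b. (a, b) \<in> S \<Longrightarrow> r a < r b \<or> (r a = r b \<and> (g a, g b) \<in> Q (r a))"
    and "\<And>l. acyclic (Q l)"
  shows "acyclic S"
proof -
  have rank: "r x < r y \<or> (r x = r y \<and> (g x, g y) \<in> (Q (r x))\<^sup>+)" if "(x, y) \<in> S\<^sup>+" for x y
    using that
  proof (induction rule: trancl_induct)
    case (base y)
    then show ?case using assms(1) by blast
  next
    case (step y z)
    from assms(1)[OF step.hyps(2)] step.IH show ?case
      by (auto intro: trancl_into_trancl)
  qed
  show ?thesis unfolding acyclic_def
  proof (intro allI notI)
    fix x assume "(x, x) \<in> S\<^sup>+"
    from rank[OF this] have "(g x, g x) \<in> (Q (r x))\<^sup>+" by simp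
    with assms(2)[of "r x"] show False by (simp add: acyclic_def)
  qed
qed

section \<open>Atomic flows and ai-cycles\<close>

definition vertex_rel :: "flow \<Rightarrow> (nat \<times> nat) set" where
  "vertex_rel F = {(u, v). \<exists>e \<in> fedges F. fsrc F e = Some u \<and> ftgt F e = Some v}"

lemma atomic_flowI:
  assumes "finite (fverts F)" "finite (fedges F)"
    "\<And>e v. e \<in> fedges F \<Longrightarrow> fsrc F e = Some v \<Longrightarrow> v \<in> fverts F"
    "\<And>e v. e \<in> fedges F \<Longrightarrow> ftgt F e = Some v \<Longrightarrow> v \<in> fverts F"
    "\<And>v. v \<in> fverts F \<Longrightarrow> arity_ok (flab F v) (upper_edges F v) (lower_edges F v)"
    "acyclic (vertex_rel F)" "polarity_ok F pol"
  shows "atomic_flow F"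
  using assms unfolding atomic_flow_def vertex_rel_def by blast

lemma atomic_flowD:
  assumes "atomic_flow F"
  shows "finite (fverts F)" "finite (fedges F)"
    "\<And>e v. e \<in> fedges F \<Longrightarrow> fsrc F e = Some v \<Longrightarrow> v \<in> fverts F"
    "\<And>e v. e \<in> fedges F \<Longrightarrow> ftgt F e = Some v \<Longrightarrow> v \<in> fverts F"
    "\<And>v. v \<in> fverts F \<Longrightarrow> arity_ok (flab F v) (upper_edges F v) (lower_edges F v)"
    "acyclic (vertex_rel F)" "\<exists>pol. polarity_ok F pol"
  using assms unfolding atomic_flow_def vertex_rel_def by blast+

lemma arity_ok_image:
  assumes "inj_on f (U \<union> L)" "arity_ok k U L"
  shows "arity_ok k (f ` U) (f ` L)"
proof -
  have "card (f ` U) = card U" "card (f ` L) = card L"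
    using assms(1) by (auto intro: card_image inj_on_subset)
  then show ?thesis using assms(2) unfolding arity_ok_def by (cases k) auto
qed

lemma flow_upperI: "e \<in> fedges F \<Longrightarrow> fsrc F e = None \<Longrightarrow> e \<in> flow_upper F"
  and flow_lowerI: "e \<in> fedges F \<Longrightarrow> ftgt F e = None \<Longrightarrow> e \<in> flow_lower F"
  unfolding flow_upper_def flow_lower_def by blast+

lemma ai_cycleD:
  assumes "ai_cycle F p"
  shows "p \<noteq> []" "successively (ai_join F) p" "ai_join F (last p) (hd p)"
    "distinct (map fst p)" "fst ` set p \<subseteq> fedges F"
  using assms unfolding ai_cycle_def ai_path_def by blast+

lemma ai_cycle_pred:
  assumes "ai_cycle F p" "s \<in> set p"
  obtains s0 where "s0 \<in> set p" "ai_join F s0 s"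
proof -
  obtain k where k: "k < length p" "s = p ! k" using assms(2) by (metis in_set_conv_nth)
  show thesis
  proof (cases k)
    case 0
    then have "s = hd p" using k by (simp add: hd_conv_nth)
    then show thesis using that[of "last p"] ai_cycleD(1,3)[OF assms(1)] by simp
  next
    case (Suc k')
    then show thesis
      using that[of "p ! k'"] k successively_nth[OF ai_cycleD(2)[OF assms(1)], of k'] by simp
  qed
qed

lemma ai_cycle_succ:
  assumes "ai_cycle F p" "s \<in> set p"
  obtains s1 where "s1 \<in> set p" "ai_join F s s1"
proof -
  obtain k where k: "k < length p" "s = p ! k" using assms(2) by (metis in_set_conv_nth)
  show thesis
  proof (cases "Suc k = length p")
    case True
    moreover have "p \<noteq> []" using k by auto
    ultimately have "s = last p" using k True by (metis diff_Suc_1 last_conv_nth)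
    then show thesis using that[of "hd p"] ai_cycleD(1,3)[OF assms(1)] by simp
  next
    case False
    then show thesis
      using that[of "p ! Suc k"] k successively_nth[OF ai_cycleD(2)[OF assms(1)], of k] by simp
  qed
qed

lemma ai_cycle_entry:
  assumes "ai_cycle F p" "s \<in> set p"
  obtains u where "u \<in> fverts F" "entry_v F s = Some u"
  using ai_cycle_pred[OF assms] unfolding ai_join_def by blast

lemma ai_cycle_exit:
  assumes "ai_cycle F p" "s \<in> set p"
  obtains u where "u \<in> fverts F" "exit_v F s = Some u"
  using ai_cycle_succ[OF assms] unfolding ai_join_def by blast

lemma ai_cycle_edge_ends:
  assumes "ai_cycle F p" "s \<in> set p"
  shows "fsrc F (fst s) \<noteq> None" "ftgt F (fst s) \<noteq> None"
proof -
  obtain u w where "entry_v F s = Some u" "exit_v F s = Some w"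
    using ai_cycle_entry[OF assms] ai_cycle_exit[OF assms] by metis
  then show "fsrc F (fst s) \<noteq> None" "ftgt F (fst s) \<noteq> None"
    unfolding entry_v_def exit_v_def by (cases "snd s"; simp)+
qed

lemma ai_cycle_map:
  assumes "ai_cycle F p"
    and "\<And>s s'. s \<in> set p \<Longrightarrow> s' \<in> set p \<Longrightarrow> ai_join F s s' \<Longrightarrow> ai_join G (f s) (f s')"
    and "\<And>s. s \<in> set p \<Longrightarrow> fst (f s) \<in> fedges G"
    and "\<And>s s'. s \<in> set p \<Longrightarrow> s' \<in> set p \<Longrightarrow> fst (f s) = fst (f s') \<Longrightarrow> fst s = fst s'"
  shows "ai_cycle G (map f p)"
proof -
  note p = ai_cycleD[OF assms(1)]
  have "successively (ai_join G) (map f p)"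
    unfolding successively_map by (rule successively_mono[OF p(2)]) (rule assms(2))
  moreover have "ai_join G (f (last p)) (f (hd p))"
    using assms(2)[OF last_in_set[OF p(1)] hd_in_set[OF p(1)] p(3)] .
  then have "ai_join G (last (map f p)) (hd (map f p))"
    using p(1) by (simp add: last_map hd_map)
  moreover have "inj_on (fst \<circ> f) (set p)"
  proof (rule inj_onI)
    fix s s' assume s: "s \<in> set p" "s' \<in> set p" and "(fst \<circ> f) s = (fst \<circ> f) s'"
    then have "fst s = fst s'" using assms(4)[OF s] by simp
    moreover have "inj_on fst (set p)" using p(4) by (simp add: distinct_map)
    ultimately show "s = s'" using s by (simp add: inj_on_eq_iff)
  qed
  then have "distinct (map fst (map f p))"
    using p(4) by (simp add: distinct_map)
  moreover have "fst ` set (map f p) \<subseteq> fedges G" using assms(3) by auto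
  ultimately show ?thesis
    using p(1) unfolding ai_cycle_def ai_path_def by simp
qed

lemma ai_join_straight:
  assumes "ai_join F s s'" "exit_v F s = Some v" "fst s \<in> fedges F" "fst s' \<in> fedges F"
    and "flab F v \<notin> {Interaction, Cointeraction}"
  shows "fst s \<in> upper_edges F v \<and> fst s' \<in> lower_edges F v \<or>
    fst s \<in> lower_edges F v \<and> fst s' \<in> upper_edges F v"
proof -
  have "entry_v F s' = Some v" "snd s = snd s'"
    using assms(1,2,5) unfolding ai_join_def by auto
  then show ?thesis
    using assms(2-4) unfolding upper_edges_def lower_edges_def entry_v_def exit_v_def
    by (cases "snd s") auto
qed

lemma ai_join_not_at_unit:
  assumes "atomic_flow F" "ai_join F s s'" "fst s \<in> fedges F" "fst s' \<in> fedges F"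
    and "exit_v F s = Some v"
  shows "flab F v \<notin> {Weakening, Coweakening}"
proof
  assume unit: "flab F v \<in> {Weakening, Coweakening}"
  have "v \<in> fverts F" using assms(2,5) unfolding ai_join_def by auto
  then have "upper_edges F v = {} \<or> lower_edges F v = {}"
    using atomic_flowD(5)[OF assms(1), of v] unit by (auto simp: arity_ok_def)
  moreover have "fst s \<in> upper_edges F v \<and> fst s' \<in> lower_edges F v \<or>
      fst s \<in> lower_edges F v \<and> fst s' \<in> upper_edges F v"
    using ai_join_straight[OF assms(2,5,3,4)] unit by auto
  ultimately show False by blast
qed

lemma ai_cycle_step_ends:
  assumes "atomic_flow F" "ai_cycle F p" "s \<in> set p"
  obtains u w where "u \<in> fverts F" "entry_v F s = Some u" "flab F u \<notin> {Weakening, Coweakening}"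
    and "w \<in> fverts F" "exit_v F s = Some w" "flab F w \<notin> {Weakening, Coweakening}"
proof -
  have edges: "fst ` set p \<subseteq> fedges F" using ai_cycleD(5)[OF assms(2)] .
  obtain s0 where s0: "s0 \<in> set p" "ai_join F s0 s" using ai_cycle_pred[OF assms(2,3)] .
  obtain s1 where s1: "s1 \<in> set p" "ai_join F s s1" using ai_cycle_succ[OF assms(2,3)] .
  obtain u where u: "u \<in> fverts F" "exit_v F s0 = Some u" "entry_v F s = Some u"
    using s0(2) unfolding ai_join_def by blast
  obtain w where w: "w \<in> fverts F" "exit_v F s = Some w"
    using s1(2) unfolding ai_join_def by blast
  have "flab F u \<notin> {Weakening, Coweakening}"
    using ai_join_not_at_unit[OF assms(1) s0(2) _ _ u(2)] edges s0(1) assms(3) by blast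
  moreover have "flab F w \<notin> {Weakening, Coweakening}"
    using ai_join_not_at_unit[OF assms(1) s1(2) _ _ w(2)] edges s1(1) assms(3) by blast
  ultimately show thesis using that u w by blast
qed

section \<open>Polarities\<close>

definition polarity_at :: "flow \<Rightarrow> (nat \<Rightarrow> bool) \<Rightarrow> nat \<Rightarrow> bool" where
  "polarity_at F pol v \<longleftrightarrow>
     (flab F v \<in> {Contraction, Cocontraction} \<longrightarrow>
        (\<forall>e \<in> upper_edges F v \<union> lower_edges F v.
          \<forall>e' \<in> upper_edges F v \<union> lower_edges F v. pol e = pol e')) \<and>
     (flab F v = Interaction \<longrightarrow>
        (\<forall>e \<in> lower_edges F v. \<forall>e' \<in> lower_edges F v. e \<noteq> e' \<longrightarrow> pol e \<noteq> pol e')) \<and>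
     (flab F v = Cointeraction \<longrightarrow>
        (\<forall>e \<in> upper_edges F v. \<forall>e' \<in> upper_edges F v. e \<noteq> e' \<longrightarrow> pol e \<noteq> pol e'))"

lemma polarity_ok_iff: "polarity_ok F pol \<longleftrightarrow> (\<forall>v \<in> fverts F. polarity_at F pol v)"
  unfolding polarity_ok_def polarity_at_def by blast

lemma polarity_at_image:
  assumes pol: "polarity_at F q a"
    and up: "upper_edges G w \<subseteq> h ` upper_edges F a" and low: "lower_edges G w \<subseteq> h ` lower_edges F a"
    and q: "\<And>e. e \<in> upper_edges F a \<union> lower_edges F a \<Longrightarrow> P (h e) = q e"
    and lab: "flab G w = flab F a \<or> flab G w \<in> {Weakening, Coweakening}"
  shows "polarity_at G P w"
  unfolding polarity_at_def
proof (intro conjI impI ballI)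
  fix x y assume k: "flab G w \<in> {Contraction, Cocontraction}"
    and x: "x \<in> upper_edges G w \<union> lower_edges G w" and y: "y \<in> upper_edges G w \<union> lower_edges G w"
  obtain e e' where e: "e \<in> upper_edges F a \<union> lower_edges F a" "x = h e"
    and e': "e' \<in> upper_edges F a \<union> lower_edges F a" "y = h e'"
    using x y up low by blast
  have "flab F a \<in> {Contraction, Cocontraction}" using k lab by auto
  then have "\<forall>e \<in> upper_edges F a \<union> lower_edges F a.
      \<forall>e' \<in> upper_edges F a \<union> lower_edges F a. q e = q e'"
    using pol unfolding polarity_at_def by blast
  then have "q e = q e'" using e(1) e'(1) by blast
  then show "P x = P y" using q[OF e(1)] q[OF e'(1)] e(2) e'(2) by simp
next
  fix x y assume k: "flab G w = Interaction"
    and x: "x \<in> lower_edges G w" and y: "y \<in> lower_edges G w" and xy: "x \<noteq> y"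
  obtain e e' where e: "e \<in> lower_edges F a" "x = h e" and e': "e' \<in> lower_edges F a" "y = h e'"
    using x y low by blast
  have "flab F a = Interaction" using k lab by auto
  then have "\<forall>e \<in> lower_edges F a. \<forall>e' \<in> lower_edges F a. e \<noteq> e' \<longrightarrow> q e \<noteq> q e'"
    using pol unfolding polarity_at_def by blast
  moreover have "e \<noteq> e'" using xy e(2) e'(2) by auto
  ultimately have "q e \<noteq> q e'" using e(1) e'(1) by blast
  then show "P x \<noteq> P y" using q[of e] q[of e'] e e' by simp
next
  fix x y assume k: "flab G w = Cointeraction"
    and x: "x \<in> upper_edges G w" and y: "y \<in> upper_edges G w" and xy: "x \<noteq> y"
  obtain e e' where e: "e \<in> upper_edges F a" "x = h e" and e': "e' \<in> upper_edges F a" "y = h e'"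
    using x y up by blast
  have "flab F a = Cointeraction" using k lab by auto
  then have "\<forall>e \<in> upper_edges F a. \<forall>e' \<in> upper_edges F a. e \<noteq> e' \<longrightarrow> q e \<noteq> q e'"
    using pol unfolding polarity_at_def by blast
  moreover have "e \<noteq> e'" using xy e(2) e'(2) by auto
  ultimately have "q e \<noteq> q e'" using e(1) e'(1) by blast
  then show "P x \<noteq> P y" using q[of e] q[of e'] e e' by simp
qed

lemma polarity_at_Interaction:
  "polarity_at F pol v \<Longrightarrow> flab F v = Interaction \<Longrightarrow> e \<in> lower_edges F v \<Longrightarrow>
    e' \<in> lower_edges F v \<Longrightarrow> e \<noteq> e' \<Longrightarrow> pol e \<noteq> pol e'"
  unfolding polarity_at_def by blast

lemma polarity_at_Cointeraction:
  "polarity_at F pol v \<Longrightarrow> flab F v = Cointeraction \<Longrightarrow> e \<in> upper_edges F v \<Longrightarrow>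
    e' \<in> upper_edges F v \<Longrightarrow> e \<noteq> e' \<Longrightarrow> pol e \<noteq> pol e'"
  unfolding polarity_at_def by blast

lemma polarity_at_constant:
  assumes "flab F v \<in> {Contraction, Cocontraction}"
    and "\<And>e. e \<in> upper_edges F v \<union> lower_edges F v \<Longrightarrow> pol e = b"
  shows "polarity_at F pol v"
  using assms unfolding polarity_at_def by auto

section \<open>Subflows\<close>

definition subflow :: "flow \<Rightarrow> flow \<Rightarrow> bool" where
  "subflow G F \<longleftrightarrow> fverts G \<subseteq> fverts F \<and> fedges G \<subseteq> fedges F \<and>
     (\<forall>e \<in> fedges G. \<forall>v. fsrc G e = Some v \<longrightarrow> fsrc F e = Some v) \<and>
     (\<forall>e \<in> fedges G. \<forall>v. ftgt G e = Some v \<longrightarrow> ftgt F e = Some v) \<and>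
     (\<forall>v \<in> fverts G. flab G v = flab F v \<or> flab G v \<in> {Weakening, Coweakening})"

lemma subflow_vertex_rel: "subflow G F \<Longrightarrow> vertex_rel G \<subseteq> vertex_rel F"
  unfolding subflow_def vertex_rel_def by blast

lemma subflow_polarity_ok:
  assumes "subflow G F" "polarity_ok F pol"
  shows "polarity_ok G pol"
  unfolding polarity_ok_iff
proof
  fix v assume v: "v \<in> fverts G"
  then have "v \<in> fverts F" "flab G v = flab F v \<or> flab G v \<in> {Weakening, Coweakening}"
    using assms(1) unfolding subflow_def by blast+
  moreover have "upper_edges G v \<subseteq> id ` upper_edges F v" "lower_edges G v \<subseteq> id ` lower_edges F v"
    using assms(1) unfolding subflow_def upper_edges_def lower_edges_def by auto
  ultimately show "polarity_at G pol v"
    using assms(2) polarity_at_image[of F pol v G v id pol] unfolding polarity_ok_iff by simp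
qed

lemma subflow_atomic_flowI:
  assumes sub: "subflow G F" and F: "atomic_flow F"
    and "\<And>e v. e \<in> fedges G \<Longrightarrow> fsrc G e = Some v \<Longrightarrow> v \<in> fverts G"
    and "\<And>e v. e \<in> fedges G \<Longrightarrow> ftgt G e = Some v \<Longrightarrow> v \<in> fverts G"
    and "\<And>v. v \<in> fverts G \<Longrightarrow> arity_ok (flab G v) (upper_edges G v) (lower_edges G v)"
  shows "atomic_flow G"
proof -
  obtain pol where "polarity_ok F pol" using atomic_flowD(7)[OF F] by blast
  then have "polarity_ok G pol" using sub by (rule subflow_polarity_ok[rotated])
  moreover have "finite (fverts G)" "finite (fedges G)"
    using sub atomic_flowD(1,2)[OF F] unfolding subflow_def by (auto intro: finite_subset)
  moreover have "acyclic (vertex_rel G)"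
    using atomic_flowD(6)[OF F] subflow_vertex_rel[OF sub] by (rule acyclic_subset)
  ultimately show ?thesis using assms(3-5) by (intro atomic_flowI) auto
qed

lemma subflow_ai_join:
  assumes "subflow G F" "ai_join G s s'" "fst s \<in> fedges G" "fst s' \<in> fedges G"
  shows "ai_join F s s'"
proof -
  obtain v where v: "v \<in> fverts G" "exit_v G s = Some v" "entry_v G s' = Some v"
    "snd s = snd s' \<or> (fst s \<noteq> fst s' \<and> flab G v \<in> {Interaction, Cointeraction})"
    using assms(2) unfolding ai_join_def by blast
  have "exit_v F s = Some v" "entry_v F s' = Some v"
    using assms(1,3,4) v(2,3) unfolding subflow_def exit_v_def entry_v_def
    by (auto split: if_splits)
  moreover have "v \<in> fverts F" "flab G v \<in> {Interaction, Cointeraction} \<Longrightarrow> flab F v = flab G v"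
    using assms(1) v(1) unfolding subflow_def by auto
  ultimately show ?thesis using v(4) unfolding ai_join_def by auto
qed

lemma subflow_ai_cycle:
  assumes "subflow G F" "ai_cycle G p"
  shows "ai_cycle F p"
proof -
  have edges: "fst ` set p \<subseteq> fedges G" "fedges G \<subseteq> fedges F"
    using ai_cycleD(5)[OF assms(2)] assms(1) unfolding subflow_def by blast+
  have "ai_cycle F (map (\<lambda>s. s) p)"
    by (rule ai_cycle_map[OF assms(2)]) (use edges subflow_ai_join[OF assms(1)] in blast)+
  then show ?thesis by simp
qed

lemma subflow_simple_edge:
  assumes "atomic_flow G" "subflow G F" "ai_cycle G p" "e \<in> fst ` set p" "simple_edge F e"
  shows "simple_edge G e"
proof -
  obtain s where s: "s \<in> set p" "fst s = e" using assms(4) by blast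
  obtain u w where u: "u \<in> fverts G" "entry_v G s = Some u" "flab G u \<notin> {Weakening, Coweakening}"
    and w: "w \<in> fverts G" "exit_v G s = Some w" "flab G w \<notin> {Weakening, Coweakening}"
    using ai_cycle_step_ends[OF assms(1,3) s(1)] .
  have e: "e \<in> fedges G" using ai_cycleD(5)[OF assms(3)] s by blast
  obtain x y where x: "fsrc G e = Some x" "x \<in> fverts G" "flab G x \<notin> {Weakening, Coweakening}"
    and y: "ftgt G e = Some y" "y \<in> fverts G" "flab G y \<notin> {Weakening, Coweakening}"
    using u w s(2) unfolding entry_v_def exit_v_def by (cases "snd s") auto
  have "fsrc F e = Some x" "ftgt F e = Some y" "flab G x = flab F x" "flab G y = flab F y"
    using assms(2) e x y unfolding subflow_def by blast+
  then show ?thesis using assms(5) e x(1) y(1) unfolding simple_edge_def by auto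
qed

lemma subflow_cycles_fragile:
  assumes "atomic_flow G" "subflow G F" "\<forall>p. ai_cycle F p \<longrightarrow> fragile_cycle F p"
  shows "\<forall>p. ai_cycle G p \<longrightarrow> fragile_cycle G p"
proof (intro allI impI)
  fix p assume p: "ai_cycle G p"
  then have "fragile_cycle F p" using assms(2,3) subflow_ai_cycle by blast
  then obtain e where "e \<in> fst ` set p" "simple_edge F e" unfolding fragile_cycle_def by blast
  then show "fragile_cycle G p"
    using subflow_simple_edge[OF assms(1,2) p] p unfolding fragile_cycle_def by blast
qed

section \<open>Cutting a simple edge\<close>

locale simple_edge_cut =
  fixes B :: flow and i c e1 e2 e3 :: nat
  assumes B: "atomic_flow B"
    and i: "i \<in> fverts B" "flab B i = Interaction" "lower_edges B i = {e1, e2}" "e1 \<noteq> e2"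
    and c: "c \<in> fverts B" "flab B c = Cointeraction" "upper_edges B c = {e1, e3}" "e1 \<noteq> e3"
begin

definition "A = remove_ai B i c e1 e2 e3"

text \<open>B' and B'' keep the vertex and edge names of B; the weakening of B' is i and the
  coweakening of B'' is c.\<close>

definition "B' = B\<lparr>fverts := fverts B - {c}, fedges := fedges B - {e1},
    flab := (flab B)(i := Weakening), ftgt := (ftgt B)(e3 := None)\<rparr>"

definition "B'' = B\<lparr>fverts := fverts B - {i}, fedges := fedges B - {e1},
    flab := (flab B)(c := Coweakening), fsrc := (fsrc B)(e2 := None)\<rparr>"

lemma i_ne_c: "i \<noteq> c"
  using i(2) c(2) by auto

lemma e1_in: "e1 \<in> fedges B" and e2_in: "e2 \<in> fedges B" and e3_in: "e3 \<in> fedges B"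
  using i(3) c(3) unfolding lower_edges_def upper_edges_def by blast+

lemma src_e1: "fsrc B e1 = Some i" and src_e2: "fsrc B e2 = Some i"
  and tgt_e1: "ftgt B e1 = Some c" and tgt_e3: "ftgt B e3 = Some c"
  using i(3) c(3) unfolding lower_edges_def upper_edges_def by blast+

lemma fsrc_eq_i: "e \<in> fedges B \<Longrightarrow> fsrc B e = Some i \<longleftrightarrow> e = e1 \<or> e = e2"
  using i(3) unfolding lower_edges_def by blast

lemma ftgt_eq_c: "e \<in> fedges B \<Longrightarrow> ftgt B e = Some c \<longleftrightarrow> e = e1 \<or> e = e3"
  using c(3) unfolding upper_edges_def by blast

lemma fsrc_ne_c: "e \<in> fedges B \<Longrightarrow> fsrc B e \<noteq> Some c"
  using atomic_flowD(5)[OF B c(1)] c(2) unfolding arity_ok_def lower_edges_def by auto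

lemma ftgt_ne_i: "e \<in> fedges B \<Longrightarrow> ftgt B e \<noteq> Some i"
  using atomic_flowD(5)[OF B i(1)] i(2) unfolding arity_ok_def upper_edges_def by auto

lemma polarity_e2_e3: "polarity_ok B pol \<Longrightarrow> pol e2 = pol e3"
proof -
  assume "polarity_ok B pol"
  then have "polarity_at B pol i" "polarity_at B pol c"
    using i(1) c(1) unfolding polarity_ok_iff by blast+
  then have "pol e1 \<noteq> pol e2" "pol e1 \<noteq> pol e3"
    using polarity_at_Interaction[of B pol i e1 e2] polarity_at_Cointeraction[of B pol c e1 e3] i c
    by simp_all
  then show "pol e2 = pol e3" by (cases "pol e1") simp_all
qed

lemma e2_notin_flow_upper: "e2 \<notin> flow_upper B"
  using src_e2 unfolding flow_upper_def by auto

lemma e3_notin_flow_lower: "e3 \<notin> flow_lower B"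
  using tgt_e3 unfolding flow_lower_def by auto

lemma copy_wk_B': "copy_wk A e2 id id i B'"
  using i(1) i_ne_c src_e2
  unfolding copy_wk_def A_def B'_def remove_ai_def by (auto simp: option.map_id)

lemma copy_cowk_B'': "copy_cowk A e3 id id c B''"
  using c(1) i_ne_c tgt_e3
  unfolding copy_cowk_def A_def B''_def remove_ai_def by (auto simp: option.map_id)

lemma subflow_B': "subflow B' B"
  unfolding subflow_def B'_def by auto

lemma subflow_B'': "subflow B'' B"
  unfolding subflow_def B''_def by auto

lemma atomic_B': "atomic_flow B'"
proof -
  have upper: "upper_edges B' v = upper_edges B v" if "v \<noteq> c" for v
    using that e1_in tgt_e1 tgt_e3 unfolding upper_edges_def B'_def by auto
  have lower: "lower_edges B' v = lower_edges B v - {e1}" for v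
    unfolding lower_edges_def B'_def by auto
  show ?thesis
  proof (rule subflow_atomic_flowI[OF subflow_B' B])
    fix e v assume "e \<in> fedges B'" "fsrc B' e = Some v"
    then show "v \<in> fverts B'"
      using atomic_flowD(3)[OF B] fsrc_ne_c unfolding B'_def by fastforce
  next
    fix e v assume "e \<in> fedges B'" "ftgt B' e = Some v"
    then show "v \<in> fverts B'"
      using atomic_flowD(4)[OF B] ftgt_eq_c unfolding B'_def by (fastforce split: if_splits)
  next
    fix v assume v: "v \<in> fverts B'"
    show "arity_ok (flab B' v) (upper_edges B' v) (lower_edges B' v)"
    proof (cases "v = i")
      case True
      have "upper_edges B i = {}"
        using atomic_flowD(5)[OF B i(1)] i(2) unfolding arity_ok_def by simp
      then show ?thesis
        using True upper[OF i_ne_c] lower i(3,4) unfolding B'_def arity_ok_def by auto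
    next
      case False
      have "e1 \<notin> lower_edges B v" using False src_e1 unfolding lower_edges_def by auto
      then show ?thesis
        using False v atomic_flowD(5)[OF B] upper lower unfolding B'_def by auto
    qed
  qed
qed

lemma atomic_B'': "atomic_flow B''"
proof -
  have lower: "lower_edges B'' v = lower_edges B v" if "v \<noteq> i" for v
    using that e1_in src_e1 src_e2 unfolding lower_edges_def B''_def by auto
  have upper: "upper_edges B'' v = upper_edges B v - {e1}" for v
    unfolding upper_edges_def B''_def by auto
  show ?thesis
  proof (rule subflow_atomic_flowI[OF subflow_B'' B])
    fix e v assume "e \<in> fedges B''" "fsrc B'' e = Some v"
    then show "v \<in> fverts B''"
      using atomic_flowD(3)[OF B] fsrc_eq_i unfolding B''_def by (fastforce split: if_splits)
  next
    fix e v assume "e \<in> fedges B''" "ftgt B'' e = Some v"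
    then show "v \<in> fverts B''"
      using atomic_flowD(4)[OF B] ftgt_ne_i unfolding B''_def by fastforce
  next
    fix v assume v: "v \<in> fverts B''"
    show "arity_ok (flab B'' v) (upper_edges B'' v) (lower_edges B'' v)"
    proof (cases "v = c")
      case True
      have "lower_edges B c = {}"
        using atomic_flowD(5)[OF B c(1)] c(2) unfolding arity_ok_def by simp
      then show ?thesis
        using True lower[OF i_ne_c[symmetric]] upper c(3,4) unfolding B''_def arity_ok_def by auto
    next
      case False
      have "e1 \<notin> upper_edges B v" using False tgt_e1 unfolding upper_edges_def by auto
      then show ?thesis
        using False v atomic_flowD(5)[OF B] upper lower unfolding B''_def by auto
    qed
  qed
qed

lemma flow_upper_B': "flow_upper B' = flow_upper B"
  using src_e1 unfolding flow_upper_def B'_def by auto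

lemma flow_lower_B': "flow_lower B' = insert e3 (flow_lower B)"
  using e3_in c(4) tgt_e1 unfolding flow_lower_def B'_def by auto

lemma flow_upper_B'': "flow_upper B'' = insert e2 (flow_upper B)"
  using e2_in i(4) src_e1 unfolding flow_upper_def B''_def by auto

lemma flow_lower_B'': "flow_lower B'' = flow_lower B"
  using tgt_e1 unfolding flow_lower_def B''_def by auto

lemma card_edges_B': "card (fedges B') < card (fedges B)"
  and card_edges_B'': "card (fedges B'') < card (fedges B)"
proof -
  have "card (fedges B - {e1}) < card (fedges B)"
    using atomic_flowD(2)[OF B] e1_in by (rule card_Diff1_less)
  then show "card (fedges B') < card (fedges B)" "card (fedges B'') < card (fedges B)"
    unfolding B'_def B''_def by simp_all
qed

end

lemma simple_edge_cutI:
  assumes "atomic_flow B" "simple_edge B e1"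
  obtains i c e2 e3 where "simple_edge_cut B i c e1 e2 e3"
proof -
  obtain i c where e1: "e1 \<in> fedges B" "fsrc B e1 = Some i" "ftgt B e1 = Some c"
    and ic: "flab B i = Interaction" "flab B c = Cointeraction"
    using assms(2) unfolding simple_edge_def by blast
  have i: "i \<in> fverts B" and c: "c \<in> fverts B"
    using atomic_flowD(3,4)[OF assms(1) e1(1)] e1(2,3) by auto
  have "card (lower_edges B i) = 2" "e1 \<in> lower_edges B i"
    using atomic_flowD(5)[OF assms(1) i] ic(1) e1(1,2) by (auto simp: arity_ok_def lower_edges_def)
  then have "\<exists>e2. e2 \<noteq> e1 \<and> lower_edges B i = {e1, e2}" by (auto simp: card_2_iff)
  then obtain e2 where e2: "e2 \<noteq> e1" "lower_edges B i = {e1, e2}" by blast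
  have "card (upper_edges B c) = 2" "e1 \<in> upper_edges B c"
    using atomic_flowD(5)[OF assms(1) c] ic(2) e1(1,3) by (auto simp: arity_ok_def upper_edges_def)
  then have "\<exists>e3. e3 \<noteq> e1 \<and> upper_edges B c = {e1, e3}" by (auto simp: card_2_iff)
  then obtain e3 where e3: "e3 \<noteq> e1" "upper_edges B c = {e1, e3}" by blast
  show thesis
    by (rule that, unfold_locales) (use assms(1) i c ic e2 e3 in auto)
qed

section \<open>Gluing\<close>

text \<open>The polarity clause is what allows the polarities of the two reducts to be glued
  along the new (co)contractions.\<close>

definition cycle_free_bc :: "flow \<Rightarrow> flow \<Rightarrow> (nat \<Rightarrow> nat) \<Rightarrow> (nat \<Rightarrow> nat) \<Rightarrow> bool" where
  "cycle_free_bc B C up lo \<longleftrightarrow> bc B C up lo \<and> atomic_flow C \<and> cycle_free C \<and>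
     bij_betw up (flow_upper B) (flow_upper C) \<and> bij_betw lo (flow_lower B) (flow_lower C) \<and>
     (\<forall>pol. polarity_ok B pol \<longrightarrow> (\<exists>pol'. polarity_ok C pol' \<and>
        (\<forall>e \<in> flow_upper B. pol' (up e) = pol e) \<and> (\<forall>e \<in> flow_lower B. pol' (lo e) = pol e)))"

text \<open>The vertices and edges of the glued flow are numbered tag k n: the copies of D1 and D2
  are tagged OfD1 and OfD2; tag Top \<epsilon> names both the cocontraction attached to the upper
  edge \<epsilon> of B and the new upper edge above it, tag Bottom \<epsilon> both the contraction
  attached to the lower edge \<epsilon> and the new lower edge below it.\<close>

datatype piece = OfD1 | OfD2 | Top | Bottom

definition piece_code :: "piece \<Rightarrow> nat" where
  "piece_code k = (case k of OfD1 \<Rightarrow> 0 | OfD2 \<Rightarrow> 1 | Top \<Rightarrow> 2 | Bottom \<Rightarrow> 3)"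

definition tag :: "piece \<Rightarrow> nat \<Rightarrow> nat" where
  "tag k n = 4 * n + piece_code k"

definition piece :: "nat \<Rightarrow> piece" where
  "piece n = (if n mod 4 = 0 then OfD1 else if n mod 4 = 1 then OfD2
     else if n mod 4 = 2 then Top else Bottom)"

definition untag :: "nat \<Rightarrow> nat" where
  "untag n = n div 4"

lemma tag_mod: "tag k n mod 4 = piece_code k"
  and untag_tag [simp]: "untag (tag k n) = n"
proof -
  have "piece_code k < 4" by (cases k) (simp_all add: piece_code_def)
  then show "tag k n mod 4 = piece_code k" "untag (tag k n) = n"
    unfolding untag_def tag_def by presburger+
qed

lemma piece_tag [simp]: "piece (tag k n) = k"
  by (cases k) (simp_all add: piece_def tag_mod piece_code_def)

lemma tag_untag: "tag (piece n) (untag n) = n"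
proof -
  have "n mod 4 = 0 \<or> n mod 4 = 1 \<or> n mod 4 = 2 \<or> n mod 4 = 3" by presburger
  then show ?thesis
    unfolding piece_def untag_def tag_def piece_code_def by (elim disjE; simp; presburger)
qed

lemma tag_eq_iff [simp]: "tag k n = tag l m \<longleftrightarrow> k = l \<and> n = m"
proof
  assume eq: "tag k n = tag l m"
  have "k = piece (tag l m)" "n = untag (tag l m)" unfolding eq[symmetric] by simp_all
  then show "k = l \<and> n = m" by simp
qed simp

lemma untag_inj: "piece m = piece n \<Longrightarrow> untag m = untag n \<Longrightarrow> m = n"
  by (metis tag_untag)

lemma inj_on_tag [simp]: "inj_on (tag k) X"
  by (rule inj_onI) simp

locale bc_gluing = simple_edge_cut +
  fixes D1 u1 l1 D2 u2 l2
  assumes on_cycle: "\<exists>p. ai_cycle B p \<and> e1 \<in> fst ` set p"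
    and D1: "cycle_free_bc B' D1 u1 l1"
    and D2: "cycle_free_bc B'' D2 u2 l2"
begin

abbreviation "Ups \<equiv> flow_upper B"
abbreviation "Lows \<equiv> flow_lower B"

lemma atomic_D1: "atomic_flow D1" and cycle_free_D1: "cycle_free D1"
  and u1: "bij_betw u1 Ups (flow_upper D1)"
  and l1: "bij_betw l1 (insert e3 Lows) (flow_lower D1)"
  using D1 flow_upper_B' flow_lower_B' unfolding cycle_free_bc_def by auto

lemma atomic_D2: "atomic_flow D2" and cycle_free_D2: "cycle_free D2"
  and u2: "bij_betw u2 (insert e2 Ups) (flow_upper D2)"
  and l2: "bij_betw l2 Lows (flow_lower D2)"
  using D2 flow_upper_B'' flow_lower_B'' unfolding cycle_free_bc_def by auto

text \<open>J is the lower edge of D1 coming from e3, K the upper edge of D2 coming from e2;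
  in C they become the single edge tag OfD1 J.\<close>

definition "J = l1 e3"
definition "K = u2 e2"

definition "hE2 e = (if e = K then tag OfD1 J else tag OfD2 e)"

definition "src1 e = (case fsrc D1 e of Some v \<Rightarrow> Some (tag OfD1 v)
    | None \<Rightarrow> Some (tag Top (the_inv_into Ups u1 e)))"
definition "src2 e = (case fsrc D2 e of Some v \<Rightarrow> Some (tag OfD2 v)
    | None \<Rightarrow> Some (tag Top (the_inv_into Ups u2 e)))"
definition "tgt1 e = (case ftgt D1 e of Some v \<Rightarrow> Some (tag OfD1 v)
    | None \<Rightarrow> Some (tag Bottom (the_inv_into Lows l1 e)))"
definition "tgt2 e = (case ftgt D2 e of Some v \<Rightarrow> Some (tag OfD2 v)
    | None \<Rightarrow> Some (tag Bottom (the_inv_into Lows l2 e)))"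

definition "C = \<lparr>
   fverts = tag OfD1 ` fverts D1 \<union> tag OfD2 ` fverts D2 \<union> tag Top ` Ups \<union> tag Bottom ` Lows,
   fedges = tag OfD1 ` fedges D1 \<union> hE2 ` fedges D2 \<union> tag Top ` Ups \<union> tag Bottom ` Lows,
   flab = (\<lambda>n. case piece n of OfD1 \<Rightarrow> flab D1 (untag n) | OfD2 \<Rightarrow> flab D2 (untag n)
     | Top \<Rightarrow> Cocontraction | Bottom \<Rightarrow> Contraction),
   fsrc = (\<lambda>n. case piece n of OfD1 \<Rightarrow> src1 (untag n) | OfD2 \<Rightarrow> src2 (untag n)
     | Top \<Rightarrow> None | Bottom \<Rightarrow> Some n),
   ftgt = (\<lambda>n. case piece n of OfD1 \<Rightarrow> (if untag n = J then tgt2 K else tgt1 (untag n))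
     | OfD2 \<Rightarrow> tgt2 (untag n) | Top \<Rightarrow> Some n | Bottom \<Rightarrow> None)\<rparr>"

lemma fverts_C:
    "fverts C = tag OfD1 ` fverts D1 \<union> tag OfD2 ` fverts D2 \<union> tag Top ` Ups \<union> tag Bottom ` Lows"
  and fedges_C:
    "fedges C = tag OfD1 ` fedges D1 \<union> hE2 ` fedges D2 \<union> tag Top ` Ups \<union> tag Bottom ` Lows"
  by (simp_all add: C_def)

lemma flab_C [simp]: "flab C (tag OfD1 v) = flab D1 v" "flab C (tag OfD2 v) = flab D2 v"
    "flab C (tag Top v) = Cocontraction" "flab C (tag Bottom v) = Contraction"
  and fsrc_C [simp]: "fsrc C (tag OfD1 e) = src1 e" "fsrc C (tag OfD2 e) = src2 e"
    "fsrc C (tag Top e) = None" "fsrc C (tag Bottom e) = Some (tag Bottom e)"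
  and ftgt_C [simp]: "ftgt C (tag OfD1 e) = (if e = J then tgt2 K else tgt1 e)"
    "ftgt C (tag OfD2 e) = tgt2 e" "ftgt C (tag Top e) = Some (tag Top e)"
    "ftgt C (tag Bottom e) = None"
  by (simp_all add: C_def)

lemma J_in: "J \<in> flow_lower D1"
  using l1 unfolding J_def bij_betw_def by auto

lemma K_in: "K \<in> flow_upper D2"
  using u2 unfolding K_def bij_betw_def by auto

lemma u1_in: "\<epsilon> \<in> Ups \<Longrightarrow> u1 \<epsilon> \<in> flow_upper D1"
  using u1 unfolding bij_betw_def by auto

lemma u2_in: "\<epsilon> \<in> Ups \<Longrightarrow> u2 \<epsilon> \<in> flow_upper D2 \<and> u2 \<epsilon> \<noteq> K"
  using u2 e2_notin_flow_upper unfolding K_def bij_betw_def by (auto simp: image_iff)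

lemma l1_in: "\<epsilon> \<in> Lows \<Longrightarrow> l1 \<epsilon> \<in> flow_lower D1 \<and> l1 \<epsilon> \<noteq> J"
  using l1 e3_notin_flow_lower unfolding J_def bij_betw_def by (auto simp: image_iff)

lemma l2_in: "\<epsilon> \<in> Lows \<Longrightarrow> l2 \<epsilon> \<in> flow_lower D2"
  using l2 unfolding bij_betw_def by auto

lemma D1_upper_cases: "e \<in> flow_upper D1 \<Longrightarrow> \<exists>\<epsilon> \<in> Ups. e = u1 \<epsilon>"
  and D2_upper_cases: "e \<in> flow_upper D2 \<Longrightarrow> e \<noteq> K \<Longrightarrow> \<exists>\<epsilon> \<in> Ups. e = u2 \<epsilon>"
  and D1_lower_cases: "e \<in> flow_lower D1 \<Longrightarrow> e \<noteq> J \<Longrightarrow> \<exists>\<epsilon> \<in> Lows. e = l1 \<epsilon>"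
  and D2_lower_cases: "e \<in> flow_lower D2 \<Longrightarrow> \<exists>\<epsilon> \<in> Lows. e = l2 \<epsilon>"
  using u1 u2 l1 l2 unfolding J_def K_def bij_betw_def by auto

lemma src1_Some: "fsrc D1 e = Some v \<Longrightarrow> src1 e = Some (tag OfD1 v)"
  and src2_Some: "fsrc D2 e = Some v \<Longrightarrow> src2 e = Some (tag OfD2 v)"
  and tgt1_Some: "ftgt D1 e = Some v \<Longrightarrow> tgt1 e = Some (tag OfD1 v)"
  and tgt2_Some: "ftgt D2 e = Some v \<Longrightarrow> tgt2 e = Some (tag OfD2 v)"
  by (simp_all add: src1_def src2_def tgt1_def tgt2_def)

lemma src1_u1: "\<epsilon> \<in> Ups \<Longrightarrow> src1 (u1 \<epsilon>) = Some (tag Top \<epsilon>)"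
  and src2_u2: "\<epsilon> \<in> Ups \<Longrightarrow> src2 (u2 \<epsilon>) = Some (tag Top \<epsilon>)"
  and tgt1_l1: "\<epsilon> \<in> Lows \<Longrightarrow> tgt1 (l1 \<epsilon>) = Some (tag Bottom \<epsilon>)"
  and tgt2_l2: "\<epsilon> \<in> Lows \<Longrightarrow> tgt2 (l2 \<epsilon>) = Some (tag Bottom \<epsilon>)"
  using u1 u2 l1 l2 u1_in u2_in l1_in l2_in
  by (auto simp: src1_def src2_def tgt1_def tgt2_def flow_upper_def flow_lower_def
      bij_betw_def the_inv_into_f_f)

lemma src_tgt_not_None: "src1 e \<noteq> None" "src2 e \<noteq> None" "tgt1 e \<noteq> None" "tgt2 e \<noteq> None"
  by (simp_all add: src1_def src2_def tgt1_def tgt2_def split: option.splits)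

lemma fsrc_C_hE2: "e \<noteq> K \<Longrightarrow> fsrc C (hE2 e) = src2 e"
  by (simp add: hE2_def)

lemma ftgt_C_hE2: "ftgt C (hE2 e) = tgt2 e"
  by (simp add: hE2_def)

lemma inj_on_hE2: "inj_on hE2 (fedges D2)"
  by (rule inj_onI) (auto simp: hE2_def split: if_splits)

lemma fedges_C_cases:
  assumes "n \<in> fedges C"
  obtains (D1) e where "e \<in> fedges D1" "n = tag OfD1 e"
    | (D2) e where "e \<in> fedges D2" "e \<noteq> K" "n = tag OfD2 e"
    | (Up) \<epsilon> where "\<epsilon> \<in> Ups" "n = tag Top \<epsilon>"
    | (Low) \<epsilon> where "\<epsilon> \<in> Lows" "n = tag Bottom \<epsilon>"
  using assms J_in unfolding fedges_C hE2_def flow_lower_def by (auto split: if_splits)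

lemma fverts_C_cases:
  assumes "n \<in> fverts C"
  obtains (D1) a where "a \<in> fverts D1" "n = tag OfD1 a"
    | (D2) a where "a \<in> fverts D2" "n = tag OfD2 a"
    | (Up) \<epsilon> where "\<epsilon> \<in> Ups" "n = tag Top \<epsilon>"
    | (Low) \<epsilon> where "\<epsilon> \<in> Lows" "n = tag Bottom \<epsilon>"
  using assms unfolding fverts_C by auto

lemma fsrc_C_cases:
  assumes "n \<in> fedges C" "fsrc C n = Some x"
  obtains (D1) e v where "e \<in> fedges D1" "n = tag OfD1 e" "fsrc D1 e = Some v" "x = tag OfD1 v"
    | (D1_upper) \<epsilon> where "\<epsilon> \<in> Ups" "n = tag OfD1 (u1 \<epsilon>)" "x = tag Top \<epsilon>"
    | (D2) e v where "e \<in> fedges D2" "e \<noteq> K" "n = tag OfD2 e" "fsrc D2 e = Some v" "x = tag OfD2 v"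
    | (D2_upper) \<epsilon> where "\<epsilon> \<in> Ups" "n = tag OfD2 (u2 \<epsilon>)" "x = tag Top \<epsilon>"
    | (Low) \<epsilon> where "\<epsilon> \<in> Lows" "n = tag Bottom \<epsilon>" "x = tag Bottom \<epsilon>"
  using assms(1)
proof (cases rule: fedges_C_cases)
  case (D1 e)
  show thesis
  proof (cases "fsrc D1 e")
    case None
    then obtain \<epsilon> where "\<epsilon> \<in> Ups" "e = u1 \<epsilon>"
      using D1_upper_cases flow_upperI D1(1) by blast
    then show thesis using that(2) assms(2) D1(2) src1_u1 by auto
  next
    case (Some v)
    then show thesis using that(1) assms(2) D1 src1_Some by auto
  qed
next
  case (D2 e)
  show thesis
  proof (cases "fsrc D2 e")
    case None
    then obtain \<epsilon> where "\<epsilon> \<in> Ups" "e = u2 \<epsilon>"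
      using D2_upper_cases flow_upperI D2(1,2) by blast
    then show thesis using that(4) assms(2) D2(3) src2_u2 by auto
  next
    case (Some v)
    then show thesis using that(3) assms(2) D2 src2_Some by auto
  qed
qed (use assms(2) that(5) in auto)

lemma tgt2_cases:
  assumes "e \<in> fedges D2" "tgt2 e = Some x"
  obtains (D2) v where "ftgt D2 e = Some v" "x = tag OfD2 v"
    | (D2_lower) \<epsilon> where "\<epsilon> \<in> Lows" "e = l2 \<epsilon>" "x = tag Bottom \<epsilon>"
proof (cases "ftgt D2 e")
  case None
  then obtain \<epsilon> where "\<epsilon> \<in> Lows" "e = l2 \<epsilon>"
    using D2_lower_cases flow_lowerI assms(1) by blast
  then show thesis using that(2) assms(2) tgt2_l2 by auto
next
  case (Some v)
  then show thesis using that(1) assms(2) tgt2_Some by auto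
qed

lemma ftgt_C_cases:
  assumes "n \<in> fedges C" "ftgt C n = Some x"
  obtains (D1) e v where "e \<in> fedges D1" "e \<noteq> J" "n = tag OfD1 e" "ftgt D1 e = Some v"
      "x = tag OfD1 v"
    | (D1_lower) \<epsilon> where "\<epsilon> \<in> Lows" "n = tag OfD1 (l1 \<epsilon>)" "x = tag Bottom \<epsilon>"
    | (D2) e v where "e \<in> fedges D2" "n = hE2 e" "ftgt D2 e = Some v" "x = tag OfD2 v"
    | (D2_lower) \<epsilon> where "\<epsilon> \<in> Lows" "n = hE2 (l2 \<epsilon>)" "x = tag Bottom \<epsilon>"
    | (Up) \<epsilon> where "\<epsilon> \<in> Ups" "n = tag Top \<epsilon>" "x = tag Top \<epsilon>"
proof -
  note outer = that
  have D2_case: thesis if e: "e \<in> fedges D2" "n = hE2 e" "tgt2 e = Some x" for e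
    using e(1,3) by (cases rule: tgt2_cases) (use outer(3,4) e(1,2) in auto)
  from assms(1) show thesis
  proof (cases rule: fedges_C_cases)
    case (D1 e)
    show thesis
    proof (cases "e = J")
      case True
      have "K \<in> fedges D2" using K_in unfolding flow_upper_def by blast
      then show thesis
        using D2_case[of K] D1(2) True assms(2) by (simp add: hE2_def)
    next
      case False
      show thesis
      proof (cases "ftgt D1 e")
        case None
        then obtain \<epsilon> where "\<epsilon> \<in> Lows" "e = l1 \<epsilon>"
          using D1_lower_cases flow_lowerI D1(1) False by blast
        then show thesis using outer(2) assms(2) D1(2) False tgt1_l1 by auto
      next
        case (Some v)
        then show thesis using outer(1) assms(2) D1 False tgt1_Some by auto
      qed
    qed
  next
    case (D2 e)
    then show thesis using D2_case[of e] assms(2) by (simp add: hE2_def)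
  qed (use assms(2) outer(5) in auto)
qed

lemma flow_upper_A: "flow_upper A - {e2} = Ups"
  and flow_lower_A: "flow_lower A - {e3} = Lows"
  using src_e1 src_e2 tgt_e1 tgt_e3
  unfolding flow_upper_def flow_lower_def A_def remove_ai_def by auto

lemma glue_C: "glue A e2 e3 id id D1 u1 l1 D2 u2 l2 (tag OfD1) (tag OfD1) (tag OfD2) hE2
    (tag Top) (tag Bottom) (tag Top) (tag Bottom) C"
  unfolding glue_def Let_def flow_upper_A flow_lower_A id_apply
proof (intro conjI)
  show "inj_on hE2 (fedges D2)" by (rule inj_on_hE2)
  show "tag OfD1 (l1 e3) = hE2 (u2 e2)" by (simp add: hE2_def J_def K_def)
  show "tag OfD1 ` fedges D1 \<inter> hE2 ` fedges D2 = {tag OfD1 (l1 e3)}"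
    using J_in K_in unfolding flow_lower_def flow_upper_def J_def[symmetric] K_def[symmetric]
    by (auto simp: hE2_def split: if_splits)
  show "(tag OfD1 ` fedges D1 \<union> hE2 ` fedges D2) \<inter> tag Top ` Ups = {}"
    "(tag OfD1 ` fedges D1 \<union> hE2 ` fedges D2 \<union> tag Top ` Ups) \<inter> tag Bottom ` Lows = {}"
    by (auto simp: hE2_def)
  show "\<forall>e \<in> fedges D1. \<forall>v. ftgt D1 e = Some v \<longrightarrow> ftgt C (tag OfD1 e) = Some (tag OfD1 v)"
    using J_in tgt1_Some unfolding flow_lower_def by auto
  show "\<forall>e \<in> fedges D2. \<forall>v. fsrc D2 e = Some v \<longrightarrow> fsrc C (hE2 e) = Some (tag OfD2 v)"
  proof (intro ballI allI impI)
    fix e v assume "e \<in> fedges D2" "fsrc D2 e = Some v"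
    moreover have "e \<noteq> K" using K_in \<open>fsrc D2 e = Some v\<close> unfolding flow_upper_def by auto
    ultimately show "fsrc C (hE2 e) = Some (tag OfD2 v)" using fsrc_C_hE2 src2_Some by simp
  qed
  show "\<forall>\<epsilon> \<in> Ups. fsrc C (tag OfD1 (u1 \<epsilon>)) = Some (tag Top \<epsilon>) \<and>
      fsrc C (hE2 (u2 \<epsilon>)) = Some (tag Top \<epsilon>) \<and>
      ftgt C (tag Top \<epsilon>) = Some (tag Top \<epsilon>) \<and> fsrc C (tag Top \<epsilon>) = None"
    using u2_in by (simp add: fsrc_C_hE2 src1_u1 src2_u2)
  show "\<forall>\<epsilon> \<in> Lows. ftgt C (tag OfD1 (l1 \<epsilon>)) = Some (tag Bottom \<epsilon>) \<and>
      ftgt C (hE2 (l2 \<epsilon>)) = Some (tag Bottom \<epsilon>) \<and>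
      fsrc C (tag Bottom \<epsilon>) = Some (tag Bottom \<epsilon>) \<and> ftgt C (tag Bottom \<epsilon>) = None"
    using l1_in by (simp add: ftgt_C_hE2 tgt1_l1 tgt2_l2)
qed (auto simp: fverts_C fedges_C src1_Some ftgt_C_hE2 tgt2_Some)

lemma tag_OfD1_in: "e \<in> fedges D1 \<Longrightarrow> tag OfD1 e \<in> fedges C"
  and hE2_in: "e \<in> fedges D2 \<Longrightarrow> hE2 e \<in> fedges C"
  unfolding fedges_C by simp_all

lemma upper_edges_C_OfD1: "upper_edges C (tag OfD1 a) = tag OfD1 ` upper_edges D1 a"
proof (intro set_eqI iffI)
  fix n assume "n \<in> upper_edges C (tag OfD1 a)"
  then have "n \<in> fedges C" "ftgt C n = Some (tag OfD1 a)" unfolding upper_edges_def by simp_all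
  then show "n \<in> tag OfD1 ` upper_edges D1 a"
    by (cases rule: ftgt_C_cases) (auto simp: upper_edges_def)
next
  fix n assume "n \<in> tag OfD1 ` upper_edges D1 a"
  then obtain e where e: "e \<in> fedges D1" "ftgt D1 e = Some a" "n = tag OfD1 e"
    unfolding upper_edges_def by auto
  moreover have "e \<noteq> J" using e J_in unfolding flow_lower_def by auto
  ultimately show "n \<in> upper_edges C (tag OfD1 a)"
    using tgt1_Some tag_OfD1_in unfolding upper_edges_def by simp
qed

lemma lower_edges_C_OfD1: "lower_edges C (tag OfD1 a) = tag OfD1 ` lower_edges D1 a"
proof (intro set_eqI iffI)
  fix n assume "n \<in> lower_edges C (tag OfD1 a)"
  then have "n \<in> fedges C" "fsrc C n = Some (tag OfD1 a)" unfolding lower_edges_def by simp_all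
  then show "n \<in> tag OfD1 ` lower_edges D1 a"
    by (cases rule: fsrc_C_cases) (auto simp: lower_edges_def)
next
  fix n assume "n \<in> tag OfD1 ` lower_edges D1 a"
  then show "n \<in> lower_edges C (tag OfD1 a)"
    using src1_Some tag_OfD1_in unfolding lower_edges_def by auto
qed

lemma upper_edges_C_OfD2: "upper_edges C (tag OfD2 b) = hE2 ` upper_edges D2 b"
proof (intro set_eqI iffI)
  fix n assume "n \<in> upper_edges C (tag OfD2 b)"
  then have "n \<in> fedges C" "ftgt C n = Some (tag OfD2 b)" unfolding upper_edges_def by simp_all
  then show "n \<in> hE2 ` upper_edges D2 b"
    by (cases rule: ftgt_C_cases) (auto simp: upper_edges_def)
next
  fix n assume "n \<in> hE2 ` upper_edges D2 b"
  then show "n \<in> upper_edges C (tag OfD2 b)"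
    using ftgt_C_hE2 tgt2_Some hE2_in unfolding upper_edges_def by auto
qed

lemma lower_edges_C_OfD2: "lower_edges C (tag OfD2 b) = hE2 ` lower_edges D2 b"
proof (intro set_eqI iffI)
  fix n assume "n \<in> lower_edges C (tag OfD2 b)"
  then have "n \<in> fedges C" "fsrc C n = Some (tag OfD2 b)" unfolding lower_edges_def by simp_all
  then show "n \<in> hE2 ` lower_edges D2 b"
    by (cases rule: fsrc_C_cases) (auto simp: lower_edges_def hE2_def)
next
  fix n assume "n \<in> hE2 ` lower_edges D2 b"
  then obtain e where e: "e \<in> fedges D2" "fsrc D2 e = Some b" "n = hE2 e"
    unfolding lower_edges_def by auto
  moreover have "e \<noteq> K" using e K_in unfolding flow_upper_def by auto
  ultimately show "n \<in> lower_edges C (tag OfD2 b)"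
    using fsrc_C_hE2 src2_Some hE2_in unfolding lower_edges_def by simp
qed

lemma upper_edges_C_Top: "\<epsilon> \<in> Ups \<Longrightarrow> upper_edges C (tag Top \<epsilon>) = {tag Top \<epsilon>}"
proof (intro set_eqI iffI)
  fix n assume "n \<in> upper_edges C (tag Top \<epsilon>)"
  then have "n \<in> fedges C" "ftgt C n = Some (tag Top \<epsilon>)" unfolding upper_edges_def by simp_all
  then show "n \<in> {tag Top \<epsilon>}"
    by (cases rule: ftgt_C_cases) (auto simp: hE2_def)
qed (auto simp: upper_edges_def fedges_C)

lemma lower_edges_C_Top: "\<epsilon> \<in> Ups \<Longrightarrow> lower_edges C (tag Top \<epsilon>) = {tag OfD1 (u1 \<epsilon>), hE2 (u2 \<epsilon>)}"
proof (intro set_eqI iffI)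
  fix n assume "n \<in> lower_edges C (tag Top \<epsilon>)"
  then have "n \<in> fedges C" "fsrc C n = Some (tag Top \<epsilon>)" unfolding lower_edges_def by simp_all
  then show "n \<in> {tag OfD1 (u1 \<epsilon>), hE2 (u2 \<epsilon>)}"
    by (cases rule: fsrc_C_cases) (use u2_in in \<open>auto simp: hE2_def\<close>)
next
  fix n assume "\<epsilon> \<in> Ups" "n \<in> {tag OfD1 (u1 \<epsilon>), hE2 (u2 \<epsilon>)}"
  then show "n \<in> lower_edges C (tag Top \<epsilon>)"
    using u1_in u2_in fsrc_C_hE2 src1_u1 src2_u2 tag_OfD1_in hE2_in
    unfolding lower_edges_def flow_upper_def by auto
qed

lemma upper_edges_C_Bottom:
  "\<epsilon> \<in> Lows \<Longrightarrow> upper_edges C (tag Bottom \<epsilon>) = {tag OfD1 (l1 \<epsilon>), hE2 (l2 \<epsilon>)}"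
proof (intro set_eqI iffI)
  fix n assume "n \<in> upper_edges C (tag Bottom \<epsilon>)"
  then have "n \<in> fedges C" "ftgt C n = Some (tag Bottom \<epsilon>)" unfolding upper_edges_def by simp_all
  then show "n \<in> {tag OfD1 (l1 \<epsilon>), hE2 (l2 \<epsilon>)}"
    by (cases rule: ftgt_C_cases) auto
next
  fix n assume "\<epsilon> \<in> Lows" "n \<in> {tag OfD1 (l1 \<epsilon>), hE2 (l2 \<epsilon>)}"
  then show "n \<in> upper_edges C (tag Bottom \<epsilon>)"
    using l1_in l2_in ftgt_C_hE2 tgt1_l1 tgt2_l2 tag_OfD1_in hE2_in
    unfolding upper_edges_def flow_lower_def by auto
qed

lemma lower_edges_C_Bottom: "\<epsilon> \<in> Lows \<Longrightarrow> lower_edges C (tag Bottom \<epsilon>) = {tag Bottom \<epsilon>}"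
proof (intro set_eqI iffI)
  fix n assume "n \<in> lower_edges C (tag Bottom \<epsilon>)"
  then have "n \<in> fedges C" "fsrc C n = Some (tag Bottom \<epsilon>)" unfolding lower_edges_def by simp_all
  then show "n \<in> {tag Bottom \<epsilon>}"
    by (cases rule: fsrc_C_cases) (auto simp: hE2_def)
qed (auto simp: lower_edges_def fedges_C)

lemma flow_upper_C: "flow_upper C = tag Top ` Ups"
proof (intro set_eqI iffI)
  fix n assume "n \<in> flow_upper C"
  then have "n \<in> fedges C" "fsrc C n = None" unfolding flow_upper_def by simp_all
  then show "n \<in> tag Top ` Ups"
    by (cases rule: fedges_C_cases) (simp_all add: src_tgt_not_None)
qed (auto simp: flow_upper_def fedges_C)

lemma flow_lower_C: "flow_lower C = tag Bottom ` Lows"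
proof (intro set_eqI iffI)
  fix n assume "n \<in> flow_lower C"
  then have "n \<in> fedges C" "ftgt C n = None" unfolding flow_lower_def by simp_all
  then show "n \<in> tag Bottom ` Lows"
    by (cases rule: fedges_C_cases) (simp_all add: src_tgt_not_None split: if_splits)
qed (auto simp: flow_lower_def fedges_C)

lemma fsrc_C_in: "n \<in> fedges C \<Longrightarrow> fsrc C n = Some x \<Longrightarrow> x \<in> fverts C"
  by (erule fsrc_C_cases) (auto simp: fverts_C intro: atomic_flowD(3)[OF atomic_D1]
      atomic_flowD(3)[OF atomic_D2])

lemma ftgt_C_in: "n \<in> fedges C \<Longrightarrow> ftgt C n = Some x \<Longrightarrow> x \<in> fverts C"
  by (erule ftgt_C_cases) (auto simp: fverts_C intro: atomic_flowD(4)[OF atomic_D1]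
      atomic_flowD(4)[OF atomic_D2])

lemma arity_C: "v \<in> fverts C \<Longrightarrow> arity_ok (flab C v) (upper_edges C v) (lower_edges C v)"
proof (erule fverts_C_cases)
  fix a assume "a \<in> fverts D1" "v = tag OfD1 a"
  then show ?thesis
    using arity_ok_image[OF _ atomic_flowD(5)[OF atomic_D1]]
    by (simp add: upper_edges_C_OfD1 lower_edges_C_OfD1)
next
  fix a assume a: "a \<in> fverts D2" "v = tag OfD2 a"
  have "inj_on hE2 (upper_edges D2 a \<union> lower_edges D2 a)"
    using inj_on_hE2 by (rule inj_on_subset) (auto simp: upper_edges_def lower_edges_def)
  then show ?thesis
    using a arity_ok_image[OF _ atomic_flowD(5)[OF atomic_D2]]
    by (simp add: upper_edges_C_OfD2 lower_edges_C_OfD2)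
next
  fix \<epsilon> assume "\<epsilon> \<in> Ups" "v = tag Top \<epsilon>"
  then show ?thesis
    using u2_in by (simp add: upper_edges_C_Top lower_edges_C_Top hE2_def arity_ok_def)
next
  fix \<epsilon> assume "\<epsilon> \<in> Lows" "v = tag Bottom \<epsilon>"
  then show ?thesis
    using l1_in by (simp add: upper_edges_C_Bottom lower_edges_C_Bottom hE2_def arity_ok_def)
qed

lemma vertex_rel_C_cases:
  assumes "(x, y) \<in> vertex_rel C"
  obtains (Top) "piece x = Top" "piece y \<noteq> Top"
    | (Bottom) "piece y = Bottom" "piece x \<noteq> Bottom"
    | (glued) "piece x = OfD1" "piece y = OfD2"
    | (D1) "piece x = OfD1" "piece y = OfD1" "(untag x, untag y) \<in> vertex_rel D1"
    | (D2) "piece x = OfD2" "piece y = OfD2" "(untag x, untag y) \<in> vertex_rel D2"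
proof -
  obtain n where n: "n \<in> fedges C" "fsrc C n = Some x" "ftgt C n = Some y"
    using assms unfolding vertex_rel_def by blast
  from n(1,2) show thesis
  proof (cases rule: fsrc_C_cases)
    case (D1 e v)
    from n(1,3) show thesis
      by (cases rule: ftgt_C_cases) (use D1 that in
          \<open>auto simp: vertex_rel_def hE2_def split: if_splits\<close>)
  next
    case (D2 e v)
    from n(1,3) show thesis
      by (cases rule: ftgt_C_cases) (use D2 that in
          \<open>auto simp: vertex_rel_def hE2_def split: if_splits\<close>)
  next
    case (D1_upper \<epsilon>)
    from n(1,3) show thesis
      by (cases rule: ftgt_C_cases) (use D1_upper that in auto)
  next
    case (D2_upper \<epsilon>)
    from n(1,3) show thesis
      by (cases rule: ftgt_C_cases) (use D2_upper that in auto)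
  qed (use n(3) in simp)
qed

lemma acyclic_C: "acyclic (vertex_rel C)"
proof (rule acyclic_by_rank[where g = untag])
  let ?r = "\<lambda>v. case piece v of Top \<Rightarrow> 0 | OfD1 \<Rightarrow> 1 | OfD2 \<Rightarrow> 2 | Bottom \<Rightarrow> (3::nat)"
  let ?Q = "\<lambda>l. if l = 1 then vertex_rel D1 else if l = 2 then vertex_rel D2 else {}"
  fix x y assume "(x, y) \<in> vertex_rel C"
  then show "?r x < ?r y \<or> ?r x = ?r y \<and> (untag x, untag y) \<in> ?Q (?r x)"
    by (cases rule: vertex_rel_C_cases) (auto split: piece.splits)
next
  fix l :: nat
  show "acyclic (if l = 1 then vertex_rel D1 else if l = 2 then vertex_rel D2 else {})"
    using atomic_flowD(6)[OF atomic_D1] atomic_flowD(6)[OF atomic_D2] by (simp add: acyclic_def)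
qed

definition "glued_polarity pol pol1 pol2 n = (case piece n of OfD1 \<Rightarrow> pol1 (untag n)
    | OfD2 \<Rightarrow> pol2 (untag n) | _ \<Rightarrow> pol (untag n))"

lemma polarity_ok_glued_polarity:
  assumes pol: "polarity_ok B pol"
    and pol1: "polarity_ok D1 pol1" "\<forall>e \<in> Ups. pol1 (u1 e) = pol e"
      "\<forall>e \<in> insert e3 Lows. pol1 (l1 e) = pol e"
    and pol2: "polarity_ok D2 pol2" "\<forall>e \<in> insert e2 Ups. pol2 (u2 e) = pol e"
      "\<forall>e \<in> Lows. pol2 (l2 e) = pol e"
  shows "polarity_ok C (glued_polarity pol pol1 pol2)"
  unfolding polarity_ok_iff
proof
  let ?P = "glued_polarity pol pol1 pol2"
  have P_OfD1: "?P (tag OfD1 e) = pol1 e" for e by (simp add: glued_polarity_def)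
  have P_hE2: "?P (hE2 e) = pol2 e" for e
  proof (cases "e = K")
    case True
    have "?P (hE2 e) = pol1 J" using True by (simp add: glued_polarity_def hE2_def)
    also have "\<dots> = pol e3" using pol1(3) by (simp add: J_def)
    also have "\<dots> = pol e2" using polarity_e2_e3[OF pol] by simp
    also have "\<dots> = pol2 e" using pol2(2) True by (simp add: K_def)
    finally show ?thesis .
  qed (simp add: glued_polarity_def hE2_def)
  fix v assume "v \<in> fverts C"
  then show "polarity_at C ?P v"
  proof (cases rule: fverts_C_cases)
    case (D1 a)
    then have "polarity_at D1 pol1 a" using pol1(1) unfolding polarity_ok_iff by blast
    then show ?thesis
      using polarity_at_image[where h = "tag OfD1" and G = C and w = v and P = ?P] D1(2) P_OfD1
      by (simp add: upper_edges_C_OfD1 lower_edges_C_OfD1)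
  next
    case (D2 a)
    then have "polarity_at D2 pol2 a" using pol2(1) unfolding polarity_ok_iff by blast
    then show ?thesis
      using polarity_at_image[where h = hE2 and G = C and w = v and P = ?P] D2(2) P_hE2
      by (simp add: upper_edges_C_OfD2 lower_edges_C_OfD2)
  next
    case (Up \<epsilon>)
    have "?P (tag Top \<epsilon>) = pol \<epsilon>" "?P (tag OfD1 (u1 \<epsilon>)) = pol \<epsilon>" "?P (hE2 (u2 \<epsilon>)) = pol \<epsilon>"
      using Up(1) pol1(2) pol2(2) P_OfD1 P_hE2 by (simp_all add: glued_polarity_def)
    then show ?thesis
      using Up by (intro polarity_at_constant[where b = "pol \<epsilon>"])
        (auto simp: upper_edges_C_Top lower_edges_C_Top)
  next
    case (Low \<epsilon>)
    have "?P (tag Bottom \<epsilon>) = pol \<epsilon>" "?P (tag OfD1 (l1 \<epsilon>)) = pol \<epsilon>" "?P (hE2 (l2 \<epsilon>)) = pol \<epsilon>"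
      using Low(1) pol1(3) pol2(3) P_OfD1 P_hE2 by (simp_all add: glued_polarity_def)
    then show ?thesis
      using Low by (intro polarity_at_constant[where b = "pol \<epsilon>"])
        (auto simp: upper_edges_C_Bottom lower_edges_C_Bottom)
  qed
qed

lemma polarity_C:
  assumes pol: "polarity_ok B pol"
  shows "\<exists>pol'. polarity_ok C pol' \<and> (\<forall>e \<in> Ups. pol' (tag Top e) = pol e) \<and>
    (\<forall>e \<in> Lows. pol' (tag Bottom e) = pol e)"
proof -
  have "\<exists>pol1. polarity_ok D1 pol1 \<and> (\<forall>e \<in> flow_upper B'. pol1 (u1 e) = pol e) \<and>
      (\<forall>e \<in> flow_lower B'. pol1 (l1 e) = pol e)"
    using D1 subflow_polarity_ok[OF subflow_B' pol] unfolding cycle_free_bc_def by blast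
  then obtain pol1 where pol1: "polarity_ok D1 pol1" "\<forall>e \<in> Ups. pol1 (u1 e) = pol e"
      "\<forall>e \<in> insert e3 Lows. pol1 (l1 e) = pol e"
    unfolding flow_upper_B' flow_lower_B' by blast
  have "\<exists>pol2. polarity_ok D2 pol2 \<and> (\<forall>e \<in> flow_upper B''. pol2 (u2 e) = pol e) \<and>
      (\<forall>e \<in> flow_lower B''. pol2 (l2 e) = pol e)"
    using D2 subflow_polarity_ok[OF subflow_B'' pol] unfolding cycle_free_bc_def by blast
  then obtain pol2 where pol2: "polarity_ok D2 pol2" "\<forall>e \<in> insert e2 Ups. pol2 (u2 e) = pol e"
      "\<forall>e \<in> Lows. pol2 (l2 e) = pol e"
    unfolding flow_upper_B'' flow_lower_B'' by blast
  show ?thesis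
    using polarity_ok_glued_polarity[OF pol pol1 pol2]
    by (intro exI[of _ "glued_polarity pol pol1 pol2"]) (simp add: glued_polarity_def)
qed

lemma ai_join_C_vertex:
  assumes "ai_join C s s'" "exit_v C s = Some v" "fst s \<in> fedges C" "fst s' \<in> fedges C"
    and "fsrc C (fst s) \<noteq> None" "ftgt C (fst s) \<noteq> None"
    and "fsrc C (fst s') \<noteq> None" "ftgt C (fst s') \<noteq> None"
  shows "piece v \<in> {OfD1, OfD2}"
proof -
  have "v \<in> fverts C" using assms(1,2) unfolding ai_join_def by auto
  then show ?thesis
  proof (cases rule: fverts_C_cases)
    case (Up \<epsilon>)
    then have "fst s \<in> upper_edges C v \<or> fst s' \<in> upper_edges C v"
      using ai_join_straight[OF assms(1-4)] by auto
    then show ?thesis using Up assms(5,7) by (auto simp: upper_edges_C_Top)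
  next
    case (Low \<epsilon>)
    then have "fst s \<in> lower_edges C v \<or> fst s' \<in> lower_edges C v"
      using ai_join_straight[OF assms(1-4)] by auto
    then show ?thesis using Low assms(6,8) by (auto simp: lower_edges_C_Bottom)
  qed simp_all
qed

text \<open>The glued edge tag OfD1 J is the only edge of C from one copy to the other.\<close>

lemma C_edge_sides:
  assumes "n \<in> fedges C" "fsrc C n = Some x" "ftgt C n = Some y"
    and "piece x \<in> {OfD1, OfD2}" "piece y \<in> {OfD1, OfD2}"
  shows "piece x = piece n" "piece y = piece n \<longleftrightarrow> n \<noteq> tag OfD1 J"
proof -
  from assms(1,2) show "piece x = piece n"
    by (cases rule: fsrc_C_cases) (use assms(4) in auto)
  from assms(1,3) show "piece y = piece n \<longleftrightarrow> n \<noteq> tag OfD1 J"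
    by (cases rule: ftgt_C_cases) (use assms(5) in \<open>auto simp: hE2_def\<close>)
qed

definition "D_of k = (if k = OfD1 then D1 else D2)"

lemma cycle_free_D_of: "cycle_free (D_of k)"
  using cycle_free_D1 cycle_free_D2 unfolding D_of_def by simp

lemma D_of_edge:
  assumes "n \<in> fedges C" "piece n \<in> {OfD1, OfD2}" "n \<noteq> tag OfD1 J"
  shows "untag n \<in> fedges (D_of (piece n))"
  using assms(1) by (cases rule: fedges_C_cases) (use assms(2) in \<open>auto simp: D_of_def\<close>)

lemma D_of_fsrc:
  assumes "n \<in> fedges C" "fsrc C n = Some x" "piece x = piece n" "piece n \<in> {OfD1, OfD2}"
  shows "fsrc (D_of (piece n)) (untag n) = Some (untag x)"
  using assms(1,2) by (cases rule: fsrc_C_cases) (use assms(3,4) in \<open>auto simp: D_of_def\<close>)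

lemma D_of_ftgt:
  assumes "n \<in> fedges C" "ftgt C n = Some y" "piece y = piece n" "piece n \<in> {OfD1, OfD2}"
  shows "ftgt (D_of (piece n)) (untag n) = Some (untag y)"
  using assms(1,2)
  by (cases rule: ftgt_C_cases) (use assms(3,4) in \<open>auto simp: D_of_def hE2_def split: if_splits\<close>)

lemma D_of_vertex:
  assumes "v \<in> fverts C" "piece v \<in> {OfD1, OfD2}"
  shows "untag v \<in> fverts (D_of (piece v)) \<and> flab C v = flab (D_of (piece v)) (untag v)"
  using assms(1) by (cases rule: fverts_C_cases) (use assms(2) in \<open>auto simp: D_of_def\<close>)

definition "C_entry s = the (entry_v C s)"
definition "C_exit s = the (exit_v C s)"

lemma C_cycle_ends:
  assumes "ai_cycle C p" "s \<in> set p"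
  shows "entry_v C s = Some (C_entry s)" "exit_v C s = Some (C_exit s)"
    and "piece (C_entry s) \<in> {OfD1, OfD2}" "piece (C_exit s) \<in> {OfD1, OfD2}"
proof -
  have edges: "fst ` set p \<subseteq> fedges C" using ai_cycleD(5)[OF assms(1)] .
  note ends = ai_cycle_edge_ends[OF assms(1)]
  obtain s0 where s0: "s0 \<in> set p" "ai_join C s0 s" using ai_cycle_pred[OF assms] .
  obtain s1 where s1: "s1 \<in> set p" "ai_join C s s1" using ai_cycle_succ[OF assms] .
  obtain u where u: "exit_v C s0 = Some u" "entry_v C s = Some u"
    using s0(2) unfolding ai_join_def by blast
  obtain w where w: "exit_v C s = Some w"
    using s1(2) unfolding ai_join_def by blast
  have "piece u \<in> {OfD1, OfD2}"
    using ai_join_C_vertex[OF s0(2) u(1)] edges s0(1) assms(2) ends[OF s0(1)] ends[OF assms(2)]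
    by blast
  moreover have "piece w \<in> {OfD1, OfD2}"
    using ai_join_C_vertex[OF s1(2) w] edges s1(1) assms(2) ends[OF s1(1)] ends[OF assms(2)]
    by blast
  ultimately show "entry_v C s = Some (C_entry s)" "exit_v C s = Some (C_exit s)"
    "piece (C_entry s) \<in> {OfD1, OfD2}" "piece (C_exit s) \<in> {OfD1, OfD2}"
    using u(2) w unfolding C_entry_def C_exit_def by simp_all
qed

lemma ai_join_C_exit_entry: "ai_join C s s' \<Longrightarrow> C_exit s = C_entry s'"
  unfolding ai_join_def C_exit_def C_entry_def by auto

lemma C_cycle_step:
  assumes "ai_cycle C p" "s \<in> set p"
  shows "piece (C_exit s) = piece (C_entry s) \<longleftrightarrow> fst s \<noteq> tag OfD1 J"
    and "fst s \<noteq> tag OfD1 J \<Longrightarrow> piece (C_entry s) = piece (fst s)"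
proof -
  note ends = C_cycle_ends[OF assms]
  have e: "fst s \<in> fedges C" using ai_cycleD(5)[OF assms(1)] assms(2) by blast
  consider "fsrc C (fst s) = Some (C_entry s)" "ftgt C (fst s) = Some (C_exit s)"
    | "fsrc C (fst s) = Some (C_exit s)" "ftgt C (fst s) = Some (C_entry s)"
    using ends(1,2) unfolding entry_v_def exit_v_def by (cases "snd s") auto
  then show "piece (C_exit s) = piece (C_entry s) \<longleftrightarrow> fst s \<noteq> tag OfD1 J"
    and "fst s \<noteq> tag OfD1 J \<Longrightarrow> piece (C_entry s) = piece (fst s)"
    by (cases; use C_edge_sides[OF e _ _ ends(3,4)] C_edge_sides[OF e _ _ ends(4,3)] in auto)+
qed

lemma C_cycle_avoids_glued_edge:
  assumes p: "ai_cycle C p"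
  shows "tag OfD1 J \<notin> fst ` set p"
proof -
  define T where "T v \<longleftrightarrow> piece v = OfD1" for v
  have "T (C_exit s) = T (C_entry s) \<longleftrightarrow> fst s \<noteq> tag OfD1 J" if "s \<in> set p" for s
    using C_cycle_step(1)[OF p that] C_cycle_ends(3,4)[OF p that] unfolding T_def by auto
  moreover have "T (C_exit (last p)) = T (C_entry (hd p))"
    using ai_join_C_exit_entry[OF ai_cycleD(3)[OF p]] by simp
  ultimately show ?thesis
    using walk_colour_change[where T = T and en = C_entry and ex = C_exit,
        OF ai_cycleD(2,1)[OF p] ai_join_C_exit_entry _ ai_cycleD(4)[OF p]] by simp
qed

lemma C_cycle_in_one_copy:
  assumes p: "ai_cycle C p" and s: "s \<in> set p"
  shows "piece (C_entry s) = piece (C_entry (hd p))" "piece (C_exit s) = piece (C_entry (hd p))"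
    and "piece (fst s) = piece (C_entry (hd p))" "fst s \<noteq> tag OfD1 J"
proof -
  have not_J: "fst s \<noteq> tag OfD1 J" if "s \<in> set p" for s
    using C_cycle_avoids_glued_edge[OF p] that by (metis image_eqI)
  have same: "piece (C_exit s) = piece (C_entry s)" if "s \<in> set p" for s
    using C_cycle_step(1)[OF p that] not_J[OF that] by simp
  define T where "T v \<longleftrightarrow> piece v = OfD1" for v
  have same_T: "T (C_exit s) = T (C_entry s)" if "s \<in> set p" for s
    using same[OF that] unfolding T_def by simp
  have "T (C_entry s) = T (C_entry (hd p))"
    using walk_colour_constant[where T = T and en = C_entry and ex = C_exit,
        OF ai_cycleD(2)[OF p] ai_join_C_exit_entry same_T s] .
  moreover have "piece (C_entry (hd p)) \<in> {OfD1, OfD2}"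
    using C_cycle_ends(3)[OF p] ai_cycleD(1)[OF p] by simp
  ultimately show entry: "piece (C_entry s) = piece (C_entry (hd p))"
    using C_cycle_ends(3)[OF p s] unfolding T_def by auto
  show "piece (C_exit s) = piece (C_entry (hd p))" using same[OF s] entry by simp
  show "piece (fst s) = piece (C_entry (hd p))" using C_cycle_step(2)[OF p s not_J[OF s]] entry by simp
  show "fst s \<noteq> tag OfD1 J" using not_J[OF s] .
qed

lemma D_of_cycle:
  assumes p: "ai_cycle C p" and k: "k \<in> {OfD1, OfD2}"
    and edges: "\<And>s. s \<in> set p \<Longrightarrow> piece (fst s) = k \<and> fst s \<noteq> tag OfD1 J"
    and ends: "\<And>s v. s \<in> set p \<Longrightarrow> entry_v C s = Some v \<or> exit_v C s = Some v \<Longrightarrow> piece v = k"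
  shows "ai_cycle (D_of k) (map (\<lambda>s. (untag (fst s), snd s)) p)"
proof (rule ai_cycle_map[OF p])
  have inC: "fst s \<in> fedges C" if "s \<in> set p" for s using ai_cycleD(5)[OF p] that by blast
  fix s s' assume s: "s \<in> set p" "s' \<in> set p" and j: "ai_join C s s'"
  obtain v where v: "v \<in> fverts C" "exit_v C s = Some v" "entry_v C s' = Some v"
    "snd s = snd s' \<or> (fst s \<noteq> fst s' \<and> flab C v \<in> {Interaction, Cointeraction})"
    using j unfolding ai_join_def by blast
  have pv: "piece v = k" using ends s v(2,3) by blast
  have "exit_v (D_of k) (untag (fst s), snd s) = Some (untag v)"
    using v(2) pv edges[OF s(1)] k D_of_fsrc[OF inC[OF s(1)]] D_of_ftgt[OF inC[OF s(1)]]
    by (cases "snd s") (auto simp: exit_v_def)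
  moreover have "entry_v (D_of k) (untag (fst s'), snd s') = Some (untag v)"
    using v(3) pv edges[OF s(2)] k D_of_fsrc[OF inC[OF s(2)]] D_of_ftgt[OF inC[OF s(2)]]
    by (cases "snd s'") (auto simp: entry_v_def)
  moreover have "untag v \<in> fverts (D_of k)" "flab C v = flab (D_of k) (untag v)"
    using D_of_vertex[OF v(1)] pv k by auto
  moreover have "untag (fst s) \<noteq> untag (fst s')" if "fst s \<noteq> fst s'"
    using that untag_inj edges[OF s(1)] edges[OF s(2)] by metis
  ultimately show "ai_join (D_of k) (untag (fst s), snd s) (untag (fst s'), snd s')"
    using v(4) unfolding ai_join_def by auto
next
  fix s assume "s \<in> set p"
  then show "fst (untag (fst s), snd s) \<in> fedges (D_of k)"
    using D_of_edge[of "fst s"] edges ai_cycleD(5)[OF p] k by auto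
next
  fix s s' assume "s \<in> set p" "s' \<in> set p"
    "fst (untag (fst s), snd s) = fst (untag (fst s'), snd s')"
  then show "fst s = fst s'" using untag_inj edges by auto
qed

lemma cycle_free_C: "cycle_free C"
  unfolding cycle_free_def
proof
  assume "\<exists>p. ai_cycle C p"
  then obtain p where p: "ai_cycle C p" by blast
  define k where "k = piece (C_entry (hd p))"
  have "k \<in> {OfD1, OfD2}"
    using C_cycle_ends(3)[OF p] ai_cycleD(1)[OF p] unfolding k_def by simp
  then have "ai_cycle (D_of k) (map (\<lambda>s. (untag (fst s), snd s)) p)"
    using C_cycle_in_one_copy[OF p] C_cycle_ends(1,2)[OF p] unfolding k_def
    by (intro D_of_cycle[OF p]) force+
  then show False using cycle_free_D_of unfolding cycle_free_def by blast
qed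

lemma atomic_C: "atomic_flow C"
proof -
  obtain pol where "polarity_ok B pol" using atomic_flowD(7)[OF B] by blast
  then obtain pol' where pol': "polarity_ok C pol'" using polarity_C by blast
  show ?thesis
  proof (rule atomic_flowI[OF _ _ fsrc_C_in ftgt_C_in arity_C acyclic_C pol'])
    show "finite (fverts C)" "finite (fedges C)"
      using atomic_flowD(1,2)[OF atomic_D1] atomic_flowD(1,2)[OF atomic_D2] atomic_flowD(2)[OF B]
      unfolding fverts_C fedges_C flow_upper_def flow_lower_def by auto
  qed
qed

lemma cycle_free_bc_C: "cycle_free_bc B C (tag Top) (tag Bottom)"
  unfolding cycle_free_bc_def
proof (intro conjI allI impI)
  show "bc B C (tag Top) (tag Bottom)"
    using bc.step[OF B i c on_cycle A_def copy_wk_B' copy_cowk_B'' _ _ glue_C] D1 D2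
    unfolding cycle_free_bc_def by blast
  show "bij_betw (tag Top) Ups (flow_upper C)" "bij_betw (tag Bottom) Lows (flow_lower C)"
    unfolding flow_upper_C flow_lower_C by (simp_all add: bij_betw_def)
qed (use atomic_C cycle_free_C polarity_C in auto)

end

lemma cycle_free_bc_exists:
  assumes "atomic_flow B" "\<forall>p. ai_cycle B p \<longrightarrow> fragile_cycle B p"
  shows "\<exists>C up lo. cycle_free_bc B C up lo"
  using assms
proof (induction "card (fedges B)" arbitrary: B rule: less_induct)
  case less
  show ?case
  proof (cases "\<exists>p. fragile_cycle B p")
    case False
    then have "bc B B id id" "cycle_free B"
      using bc.base[OF less.prems(1)] less.prems(2) unfolding cycle_free_def id_def by blast+
    then have "cycle_free_bc B B id id"
      using less.prems(1) unfolding cycle_free_bc_def by auto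
    then show ?thesis by blast
  next
    case True
    then obtain p e1 where p: "ai_cycle B p" "e1 \<in> fst ` set p" "simple_edge B e1"
      unfolding fragile_cycle_def by blast
    obtain i c e2 e3 where cut: "simple_edge_cut B i c e1 e2 e3"
      using simple_edge_cutI[OF less.prems(1) p(3)] .
    interpret simple_edge_cut B i c e1 e2 e3 by (rule cut)
    obtain D1 u1 l1 where D1: "cycle_free_bc B' D1 u1 l1"
      using less.hyps[OF card_edges_B' atomic_B']
        subflow_cycles_fragile[OF atomic_B' subflow_B' less.prems(2)] by blast
    obtain D2 u2 l2 where D2: "cycle_free_bc B'' D2 u2 l2"
      using less.hyps[OF card_edges_B'' atomic_B'']
        subflow_cycles_fragile[OF atomic_B'' subflow_B'' less.prems(2)] by blast
    interpret bc_gluing B i c e1 e2 e3 D1 u1 l1 D2 u2 l2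
      by unfold_locales (use p D1 D2 in blast)+
    show ?thesis using cycle_free_bc_C by blast
  qed
qed

theorem theorem5p9:
  assumes "atomic_flow B"
    and "\<forall>p. ai_cycle B p \<longrightarrow> fragile_cycle B p"
  shows "\<exists>C. atomic_flow C \<and> cycle_free C \<and> B \<rightarrow>\<^sub>b\<^sub>c C"
  using cycle_free_bc_exists[OF assms] unfolding cycle_free_bc_def bc_rel_def by blast

end
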